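(* Let $f:A\to B$ be a ring homomorphism, $\mathfrak b$ an ideal of $B$, and $A\bowtie^f\mathfrak b:=\{(a,f(a)+b): a\in A,\ b\in\mathfrak b\}\subseteq A\times B$. For a maximal ideal $\mathfrak m$ of $A$ let $S_{\mathfrak m}:=f(A\setminus\mathfrak m)+\mathfrak b$, $\mathfrak b_{S_{\mathfrak m}}:=\mathfrak bB_{S_{\mathfrak m}}$, and $f_{\mathfrak m}:A_{\mathfrak m}\to B_{S_{\mathfrak m}}$ the ring homomorphism induced by $f$. Assume that for every maximal ideal $\mathfrak m$ of $A$ containing $f^{-1}(\mathfrak b)$, either $f_{\mathfrak m}$ is surjective or $f^{-1}(\mathfrak b)A_{\mathfrak m}\neq\{0\}$. Then the following are equivalent: (i) $A\bowtie^f\mathfrak b$ has weak global dimension at most 1; (ii) $A$ has weak global dimension at most 1, $B_{\mathfrak n}$ is a valuation domain for every maximal ideal $\mathfrak n$ of $B$ not containing $\mathfrak b$, and $\mathfrak b_{S_{\mathfrak m}}=\{0\}$ for every maximal ideal $\mathfrak m$ of $A$ containing $f^{-1}(\mathfrak b)$.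
   Context: All rings are commutative with identity. A ring $R$ has weak global dimension at most 1 if $R_{\mathfrak p}$ is a valuation domain for every prime (equivalently every maximal) ideal $\mathfrak p$ of $R$. $B_{S_{\mathfrak m}}$ denotes the localization of $B$ at the multiplicative set $S_{\mathfrak m}$ (possibly zero). *)

theory Defs
  imports "HOL-Algebra.Algebra"
begin

text \<open>Standard construction: pairs (r,s) with r in R, s in S, where
  (r,s) ~ (r',s') iff t(rs' - r's) = 0 for some t in S.  If 0 is in S the
  result is the zero ring.\<close>

definition loc_rel :: "('a, 'm) ring_scheme \<Rightarrow> 'a set \<Rightarrow> (('a \<times> 'a) \<times> ('a \<times> 'a)) set" where
  "loc_rel R S = {((r, s), (r', s')). r \<in> carrier R \<and> s \<in> S \<and> r' \<in> carrier R \<and> s' \<in> S \<and>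
      (\<exists>t\<in>S. t \<otimes>\<^bsub>R\<^esub> ((r \<otimes>\<^bsub>R\<^esub> s') \<ominus>\<^bsub>R\<^esub> (r' \<otimes>\<^bsub>R\<^esub> s)) = \<zero>\<^bsub>R\<^esub>)}"

definition loc_class :: "('a, 'm) ring_scheme \<Rightarrow> 'a set \<Rightarrow> 'a \<times> 'a \<Rightarrow> ('a \<times> 'a) set" where
  "loc_class R S p = loc_rel R S `` {p}"

definition loc_rep :: "('a \<times> 'a) set \<Rightarrow> 'a \<times> 'a" where
  "loc_rep U = (SOME p. p \<in> U)"

definition loc :: "('a, 'm) ring_scheme \<Rightarrow> 'a set \<Rightarrow> ('a \<times> 'a) set ring" where
  "loc R S = \<lparr> carrier = (carrier R \<times> S) // loc_rel R S,
     monoid.mult = (\<lambda>U V. case loc_rep U of (r, s) \<Rightarrow> case loc_rep V of (r', s') \<Rightarrow>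
                        loc_class R S (r \<otimes>\<^bsub>R\<^esub> r', s \<otimes>\<^bsub>R\<^esub> s')),
     monoid.one = loc_class R S (\<one>\<^bsub>R\<^esub>, \<one>\<^bsub>R\<^esub>),
     ring.zero = loc_class R S (\<zero>\<^bsub>R\<^esub>, \<one>\<^bsub>R\<^esub>),
     ring.add = (\<lambda>U V. case loc_rep U of (r, s) \<Rightarrow> case loc_rep V of (r', s') \<Rightarrow>
                        loc_class R S ((r \<otimes>\<^bsub>R\<^esub> s') \<oplus>\<^bsub>R\<^esub> (r' \<otimes>\<^bsub>R\<^esub> s), s \<otimes>\<^bsub>R\<^esub> s')) \<rparr>"

definition loc_can :: "('a, 'm) ring_scheme \<Rightarrow> 'a set \<Rightarrow> 'a \<Rightarrow> ('a \<times> 'a) set" where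
  "loc_can R S r = loc_class R S (r, \<one>\<^bsub>R\<^esub>)"

definition loc_ext :: "('a, 'm) ring_scheme \<Rightarrow> 'a set \<Rightarrow> 'a set \<Rightarrow> ('a \<times> 'a) set set" where
  "loc_ext R S I = Idl\<^bsub>loc R S\<^esub> (loc_can R S ` I)"

definition loc_induced ::
  "('a \<Rightarrow> 'b) \<Rightarrow> ('b, 'n) ring_scheme \<Rightarrow> 'b set \<Rightarrow> ('a \<times> 'a) set \<Rightarrow> ('b \<times> 'b) set" where
  "loc_induced f B T U = (case loc_rep U of (a, s) \<Rightarrow> loc_class B T (f a, f s))"

definition valuation_domain :: "('a, 'm) ring_scheme \<Rightarrow> bool" where
  "valuation_domain R \<longleftrightarrow> domain R \<and>
     (\<forall>x\<in>carrier R. \<forall>y\<in>carrier R. x divides\<^bsub>R\<^esub> y \<or> y divides\<^bsub>R\<^esub> x)"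

definition wgldim_le1 :: "('a, 'm) ring_scheme \<Rightarrow> bool" where
  "wgldim_le1 R \<longleftrightarrow> (\<forall>P. primeideal P R \<longrightarrow> valuation_domain (loc R (carrier R - P)))"

definition amalg :: "('a, 'm) ring_scheme \<Rightarrow> ('b, 'n) ring_scheme \<Rightarrow> ('a \<Rightarrow> 'b) \<Rightarrow> 'b set
    \<Rightarrow> ('a \<times> 'b) ring" where
  "amalg A B f J = (RDirProd A B)
     \<lparr> carrier := {(a, f a \<oplus>\<^bsub>B\<^esub> j) | a j. a \<in> carrier A \<and> j \<in> J} \<rparr>"

definition S_set :: "('a, 'm) ring_scheme \<Rightarrow> ('b, 'n) ring_scheme \<Rightarrow> ('a \<Rightarrow> 'b) \<Rightarrow> 'b set
    \<Rightarrow> 'a set \<Rightarrow> 'b set" where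
  "S_set A B f J M = {f s \<oplus>\<^bsub>B\<^esub> j | s j. s \<in> carrier A - M \<and> j \<in> J}"

end

theory Submission
  imports Defs
begin

(* The weak global dimension of R is at most 1 iff S^-1 R is a valuation domain for the
   complement S of every prime, and this only involves fractions x/1: whether they vanish and
   whether one divides another. Such an elementwise condition transfers along
   any map that preserves vanishing of products and reflects vanishing and divisibility.

   A prime P of D = A \<bowtie>^f b either contains 0 \<times> b or not. In the first case P is the pullback
   along fst of the prime p = {a. (a, f a) \<in> P} of A, and every (0, j) vanishes in D_P: this is
   clear if some k \<in> f^-1(b) avoids p, since (k, 0)(0, j) = 0, and otherwise it is the vanishing
   of b in B_S_m for a maximal m \<supseteq> p. So D_P behaves like A_p. In the second case, with
   (0, j0) \<notin> P, multiplication by (0, j0) shows that P is the pullback along snd of the prime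
   q = {y. (0, j0 y) \<in> P} of B, and D_P behaves like B_q, a localization of B_n for a maximal
   n \<supseteq> q; here b is not contained in n, again by the vanishing of b in the B_S_m.

   Conversely, the valuation property of the D_P descends to A_p along a \<mapsto> (a, f a) and to B_n
   along y \<mapsto> (0, j0 y). It also forces b to vanish in B_S_m: either (0, j)(k, 0) = 0 for some
   k \<in> f^-1(b) that does not vanish in A_m, or all of f^-1(b) vanishes in A_m, so that f_m is
   surjective by hypothesis and j/1 = f(a)/f(u), which forces j to vanish. *)

section \<open>Ideals\<close>

lemma (in ideal) mem_of_add_mem:
  assumes "x \<in> carrier R" "y \<in> I" "x \<oplus> y \<in> I"
  shows "x \<in> I"
proof -
  have "x = (x \<oplus> y) \<oplus> \<ominus> y"
    using assms(1,2) Icarr by (simp add: a_assoc r_neg)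
  moreover have "(x \<oplus> y) \<oplus> \<ominus> y \<in> I"
    using assms(2,3) additive_subgroup.a_closed[OF is_additive_subgroup]
      additive_subgroup.a_inv_closed[OF is_additive_subgroup] by blast
  ultimately show ?thesis by simp
qed

lemma (in cring) exists_maximalideal_superset:
  assumes "ideal I R" "I \<noteq> carrier R"
  obtains M where "maximalideal M R" "I \<subseteq> M"
proof -
  have "\<one> \<notin> I" using assms ideal.one_imp_carrier by blast
  define \<I> where "\<I> = {K. ideal K R \<and> I \<subseteq> K \<and> \<one> \<notin> K}"
  have "\<exists>M\<in>\<I>. \<forall>K\<in>\<I>. M \<subseteq> K \<longrightarrow> K = M"
  proof (rule subset_Zorn_nonempty)
    show "\<I> \<noteq> {}" using assms(1) \<open>\<one> \<notin> I\<close> unfolding \<I>_def by blast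
  next
    fix C assume C: "C \<noteq> {}" "subset.chain \<I> C"
    then have "subset.chain {K. ideal K R} C" unfolding pred_on.chain_def \<I>_def by blast
    from chain_Union_is_ideal[OF this] have "ideal (\<Union>C) R" using C(1) by simp
    then show "\<Union>C \<in> \<I>" using C unfolding pred_on.chain_def \<I>_def by blast
  qed
  then obtain M where M: "ideal M R" "I \<subseteq> M" "\<one> \<notin> M"
    and max: "\<And>K. ideal K R \<Longrightarrow> M \<subseteq> K \<Longrightarrow> \<one> \<notin> K \<Longrightarrow> K = M"
    unfolding \<I>_def by (metis (mono_tags, lifting) mem_Collect_eq order.trans)
  have "maximalideal M R"
  proof (rule maximalidealI)
    show "carrier R \<noteq> M" using M(3) by blast
    show "K = M \<or> K = carrier R" if "ideal K R" "M \<subseteq> K" "K \<subseteq> carrier R" for K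
      using that max ideal.one_imp_carrier by blast
  qed (rule M(1))
  then show ?thesis using that M(2) by blast
qed

lemma (in cring) exists_maximalideal_above_prime:
  assumes "primeideal P R"
  obtains M where "maximalideal M R" "P \<subseteq> M"
proof -
  have "ideal P R" "P \<noteq> carrier R"
    using assms primeideal.axioms(1) primeideal.I_notcarr by metis+
  then show ?thesis using that by (rule exists_maximalideal_superset)
qed

(* psi need only be additive and multiplicative up to the factor psi 1, as y \<mapsto> (0, j0 y) into
   the amalgamated duplication is; since psi 1 \<notin> P, this factor cancels in the prime P. *)
lemma primeideal_vimage_twisted_hom:
  assumes "cring R" "cring R'" "primeideal P R'" "\<psi> \<in> carrier R \<rightarrow> carrier R'"
    and add: "\<And>x y. \<lbrakk>x \<in> carrier R; y \<in> carrier R\<rbrakk> \<Longrightarrow> \<psi> (x \<oplus>\<^bsub>R\<^esub> y) = \<psi> x \<oplus>\<^bsub>R'\<^esub> \<psi> y"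
    and mult: "\<And>x y. \<lbrakk>x \<in> carrier R; y \<in> carrier R\<rbrakk>
                 \<Longrightarrow> \<psi> x \<otimes>\<^bsub>R'\<^esub> \<psi> y = \<psi> \<one>\<^bsub>R\<^esub> \<otimes>\<^bsub>R'\<^esub> \<psi> (x \<otimes>\<^bsub>R\<^esub> y)"
    and one: "\<psi> \<one>\<^bsub>R\<^esub> \<notin> P"
  shows "primeideal {x \<in> carrier R. \<psi> x \<in> P} R"
proof -
  interpret R: cring R by fact
  interpret R': cring R' by fact
  interpret P: primeideal P R' by fact
  let ?Q = "{x \<in> carrier R. \<psi> x \<in> P}"
  have \<psi>_closed: "\<psi> x \<in> carrier R'" if "x \<in> carrier R" for x
    using assms(4) that by blast
  have mult_mem_iff: "\<psi> (x \<otimes>\<^bsub>R\<^esub> y) \<in> P \<longleftrightarrow> \<psi> x \<otimes>\<^bsub>R'\<^esub> \<psi> y \<in> P"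
    if "x \<in> carrier R" "y \<in> carrier R" for x y
  proof -
    have c: "\<psi> \<one>\<^bsub>R\<^esub> \<in> carrier R'" "\<psi> (x \<otimes>\<^bsub>R\<^esub> y) \<in> carrier R'"
      using that \<psi>_closed by simp_all
    have "\<psi> \<one>\<^bsub>R\<^esub> \<otimes>\<^bsub>R'\<^esub> \<psi> (x \<otimes>\<^bsub>R\<^esub> y) \<in> P \<longleftrightarrow> \<psi> (x \<otimes>\<^bsub>R\<^esub> y) \<in> P"
      using P.I_prime[OF c] P.I_l_closed[OF _ c(1)] one by blast
    then show ?thesis using mult[OF that] by simp
  qed
  have l_closed: "x \<otimes>\<^bsub>R\<^esub> y \<in> ?Q" if "x \<in> carrier R" "y \<in> ?Q" for x y
    using that mult_mem_iff[of x y] P.I_l_closed[of "\<psi> y" "\<psi> x"] \<psi>_closed by simp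
  have "\<psi> \<zero>\<^bsub>R\<^esub> \<oplus>\<^bsub>R'\<^esub> \<psi> \<zero>\<^bsub>R\<^esub> = \<psi> \<zero>\<^bsub>R\<^esub>"
    using add[of "\<zero>\<^bsub>R\<^esub>" "\<zero>\<^bsub>R\<^esub>", symmetric] by simp
  then have zero: "\<zero>\<^bsub>R\<^esub> \<in> ?Q"
    using \<psi>_closed[of "\<zero>\<^bsub>R\<^esub>"] by simp
  have neg: "\<ominus>\<^bsub>R\<^esub> x \<in> ?Q" if "x \<in> ?Q" for x
    using l_closed[of "\<ominus>\<^bsub>R\<^esub> \<one>\<^bsub>R\<^esub>" x] that by (simp add: R.l_minus)
  have add_closed: "x \<oplus>\<^bsub>R\<^esub> y \<in> ?Q" if "x \<in> ?Q" "y \<in> ?Q" for x y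
    using that add[of x y] P.a_closed[of "\<psi> x" "\<psi> y"] by simp
  have "ideal ?Q R"
  proof (rule idealI)
    show "subgroup ?Q (add_monoid R)"
      by (rule R.add.subgroupI) (use zero neg add_closed in \<open>auto simp: a_inv_def[symmetric]\<close>)
    show "x \<otimes>\<^bsub>R\<^esub> y \<in> ?Q" if "y \<in> ?Q" "x \<in> carrier R" for x y
      using that by (intro l_closed)
    show "y \<otimes>\<^bsub>R\<^esub> x \<in> ?Q" if "y \<in> ?Q" "x \<in> carrier R" for x y
      using l_closed[OF that(2,1)] that R.m_comm[of x y] by simp
  qed (rule R.ring_axioms)
  then show ?thesis
  proof (rule primeidealI[OF _ R.cring_axioms])
    show "carrier R \<noteq> ?Q" using one by auto
  next
    fix x y assume xy: "x \<in> carrier R" "y \<in> carrier R" "x \<otimes>\<^bsub>R\<^esub> y \<in> ?Q"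
    then have "\<psi> x \<otimes>\<^bsub>R'\<^esub> \<psi> y \<in> P" using mult_mem_iff by blast
    then show "x \<in> ?Q \<or> y \<in> ?Q"
      using P.I_prime[OF \<psi>_closed[OF xy(1)] \<psi>_closed[OF xy(2)]] xy(1,2) by blast
  qed
qed

section \<open>Localization at a multiplicative subset\<close>

(* x/1 = 0, resp. x/1 divides y/1, in S^-1 R; loc_valuation R S is the elementwise form of
   "S^-1 R is a valuation domain" (valuation_domain_loc_iff). *)
definition loc_vanishes :: "('a, 'm) ring_scheme \<Rightarrow> 'a set \<Rightarrow> 'a \<Rightarrow> bool" where
  "loc_vanishes R S x \<longleftrightarrow> (\<exists>u\<in>S. u \<otimes>\<^bsub>R\<^esub> x = \<zero>\<^bsub>R\<^esub>)"

definition loc_divides :: "('a, 'm) ring_scheme \<Rightarrow> 'a set \<Rightarrow> 'a \<Rightarrow> 'a \<Rightarrow> bool" where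
  "loc_divides R S x y \<longleftrightarrow> (\<exists>c\<in>carrier R. \<exists>u\<in>S. u \<otimes>\<^bsub>R\<^esub> y = x \<otimes>\<^bsub>R\<^esub> c)"

definition loc_valuation :: "('a, 'm) ring_scheme \<Rightarrow> 'a set \<Rightarrow> bool" where
  "loc_valuation R S \<longleftrightarrow> \<zero>\<^bsub>R\<^esub> \<notin> S
    \<and> (\<forall>x\<in>carrier R. \<forall>y\<in>carrier R.
         loc_vanishes R S (x \<otimes>\<^bsub>R\<^esub> y) \<longrightarrow> loc_vanishes R S x \<or> loc_vanishes R S y)
    \<and> (\<forall>x\<in>carrier R. \<forall>y\<in>carrier R. loc_divides R S x y \<or> loc_divides R S y x)"

lemma (in cring) mult_minus_eq_zero_iff:
  assumes "a \<in> carrier R" "b \<in> carrier R" "t \<in> carrier R"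
  shows "t \<otimes> (a \<ominus> b) = \<zero> \<longleftrightarrow> t \<otimes> a = t \<otimes> b"
proof -
  have "t \<otimes> (a \<ominus> b) = t \<otimes> a \<ominus> t \<otimes> b"
    using assms by (simp add: minus_eq r_distr r_minus)
  moreover have "\<And>x y. x \<in> carrier R \<Longrightarrow> y \<in> carrier R \<Longrightarrow> x \<ominus> y = \<zero> \<longleftrightarrow> x = y"
    by (metis a_minus_def add.inv_closed add.inv_equality minus_minus r_neg)
  ultimately show ?thesis using assms by simp
qed

locale multiplicative_subset = cring R for R (structure) + fixes S :: "'a set"
  assumes S_subset: "S \<subseteq> carrier R" and one_in_S: "\<one> \<in> S"
    and S_mult_closed: "\<lbrakk>s \<in> S; t \<in> S\<rbrakk> \<Longrightarrow> s \<otimes> t \<in> S"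
begin

lemma S_carrier: "s \<in> S \<Longrightarrow> s \<in> carrier R"
  using S_subset by blast

lemmas S_facts = S_carrier S_mult_closed one_in_S

lemma loc_rel_iff: "((r, s), (r', s')) \<in> loc_rel R S \<longleftrightarrow>
    r \<in> carrier R \<and> s \<in> S \<and> r' \<in> carrier R \<and> s' \<in> S \<and> (\<exists>t\<in>S. t \<otimes> (r \<otimes> s') = t \<otimes> (r' \<otimes> s))"
  unfolding loc_rel_def using mult_minus_eq_zero_iff S_carrier by auto

lemma equiv_loc_rel: "equiv (carrier R \<times> S) (loc_rel R S)"
proof (rule equivI)
  show "loc_rel R S \<subseteq> (carrier R \<times> S) \<times> (carrier R \<times> S)"
    unfolding loc_rel_def by auto
  show "refl_on (carrier R \<times> S) (loc_rel R S)"
  proof (rule refl_onI)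
    fix p assume "p \<in> carrier R \<times> S"
    then show "(p, p) \<in> loc_rel R S"
      using one_in_S by (cases p) (auto simp: loc_rel_iff)
  qed
  show "sym (loc_rel R S)"
  proof (rule symI)
    fix p q assume "(p, q) \<in> loc_rel R S"
    then show "(q, p) \<in> loc_rel R S"
      by (cases p, cases q) (simp add: loc_rel_iff, metis)
  qed
  show "trans (loc_rel R S)"
  proof (rule transI)
    fix x y z assume xy: "(x, y) \<in> loc_rel R S" and yz: "(y, z) \<in> loc_rel R S"
    obtain r s r' s' r'' s'' where xyz: "x = (r, s)" "y = (r', s')" "z = (r'', s'')"
      by (metis prod.exhaust)
    from xy obtain t1 where h1: "r \<in> carrier R" "s \<in> S" "r' \<in> carrier R" "s' \<in> S" "t1 \<in> S"
       "t1 \<otimes> (r \<otimes> s') = t1 \<otimes> (r' \<otimes> s)" unfolding xyz loc_rel_iff by blast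
    from yz obtain t2 where h2: "r'' \<in> carrier R" "s'' \<in> S" "t2 \<in> S"
       "t2 \<otimes> (r' \<otimes> s'') = t2 \<otimes> (r'' \<otimes> s')" unfolding xyz loc_rel_iff by blast
    note c = h1(1,3) h2(1) h1(2,4,5) h2(2,3)[THEN S_carrier] h1(2,4,5)[THEN S_carrier]
    have "(t1 \<otimes> t2 \<otimes> s') \<otimes> (r \<otimes> s'') = (t2 \<otimes> s'') \<otimes> (t1 \<otimes> (r \<otimes> s'))"
      using c by (simp add: m_ac)
    also have "\<dots> = (t1 \<otimes> s) \<otimes> (t2 \<otimes> (r' \<otimes> s''))" using h1(6) c by (simp add: m_ac)
    also have "\<dots> = (t1 \<otimes> t2 \<otimes> s') \<otimes> (r'' \<otimes> s)" using h2(4) c by (simp add: m_ac)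
    finally show "(x, z) \<in> loc_rel R S"
      unfolding xyz loc_rel_iff using h1 h2 S_mult_closed by blast
  qed
qed

abbreviation frac :: "'a \<Rightarrow> 'a \<Rightarrow> ('a \<times> 'a) set" where
  "frac r s \<equiv> loc_class R S (r, s)"

lemma carrier_loc: "carrier (loc R S) = (carrier R \<times> S) // loc_rel R S"
  by (simp add: loc_def)

lemma frac_in_carrier: "r \<in> carrier R \<Longrightarrow> s \<in> S \<Longrightarrow> frac r s \<in> carrier (loc R S)"
  unfolding carrier_loc loc_class_def by (rule quotientI) auto

lemma frac_eq_iff:
  assumes "r \<in> carrier R" "s \<in> S" "r' \<in> carrier R" "s' \<in> S"
  shows "frac r s = frac r' s' \<longleftrightarrow> (\<exists>t\<in>S. t \<otimes> (r \<otimes> s') = t \<otimes> (r' \<otimes> s))"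
  unfolding loc_class_def using assms by (simp add: eq_equiv_class_iff[OF equiv_loc_rel] loc_rel_iff)

lemma frac_eqI:
  assumes "r \<in> carrier R" "s \<in> S" "r' \<in> carrier R" "s' \<in> S" "r \<otimes> s' = r' \<otimes> s"
  shows "frac r s = frac r' s'"
proof -
  have "\<one> \<otimes> (r \<otimes> s') = \<one> \<otimes> (r' \<otimes> s)"
    using assms S_carrier by simp
  then show ?thesis using assms one_in_S frac_eq_iff by blast
qed

lemma loc_carrierE:
  assumes "U \<in> carrier (loc R S)"
  obtains r s where "r \<in> carrier R" "s \<in> S" "U = frac r s"
proof -
  obtain p where p: "p \<in> carrier R \<times> S" "U = loc_rel R S `` {p}"
    using assms unfolding carrier_loc by (rule quotientE)
  obtain r s where "p = (r, s)" by fastforce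
  then show ?thesis using that p unfolding loc_class_def by blast
qed

lemma loc_rep:
  assumes "U \<in> carrier (loc R S)"
  obtains a b where "loc_rep U = (a, b)" "a \<in> carrier R" "b \<in> S" "U = frac a b"
proof -
  obtain p where p: "p \<in> carrier R \<times> S" "U = loc_rel R S `` {p}"
    using assms unfolding carrier_loc by (rule quotientE)
  then have "p \<in> U" using equiv_class_self[OF equiv_loc_rel] by blast
  then have "loc_rep U \<in> U" unfolding loc_rep_def by (rule someI)
  then have "(p, loc_rep U) \<in> loc_rel R S" using p by blast
  then have "loc_rep U \<in> carrier R \<times> S" "U = loc_rel R S `` {loc_rep U}"
    using p equiv_type[OF equiv_loc_rel] equiv_class_eq[OF equiv_loc_rel] by blast+
  moreover obtain a b where "loc_rep U = (a, b)" by fastforce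
  ultimately show ?thesis using that unfolding loc_class_def by auto
qed

lemma frac_repE:
  assumes "r \<in> carrier R" "s \<in> S"
  obtains a b t where "loc_rep (frac r s) = (a, b)" "a \<in> carrier R" "b \<in> S" "t \<in> S"
    "t \<otimes> (a \<otimes> s) = t \<otimes> (r \<otimes> b)"
proof -
  obtain a b where ab: "loc_rep (frac r s) = (a, b)" "a \<in> carrier R" "b \<in> S" "frac r s = frac a b"
    using loc_rep[OF frac_in_carrier[OF assms]] by metis
  then obtain t where "t \<in> S" "t \<otimes> (r \<otimes> b) = t \<otimes> (a \<otimes> s)"
    using frac_eq_iff assms by blast
  then show ?thesis using that ab by metis
qed

lemma mult_frac:
  assumes "r \<in> carrier R" "s \<in> S" "r' \<in> carrier R" "s' \<in> S"
  shows "frac r s \<otimes>\<^bsub>loc R S\<^esub> frac r' s' = frac (r \<otimes> r') (s \<otimes> s')"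
proof -
  obtain a b t1 where a: "loc_rep (frac r s) = (a, b)" "a \<in> carrier R" "b \<in> S" "t1 \<in> S"
    "t1 \<otimes> (a \<otimes> s) = t1 \<otimes> (r \<otimes> b)" using frac_repE[OF assms(1,2)] .
  obtain a' b' t2 where a': "loc_rep (frac r' s') = (a', b')" "a' \<in> carrier R" "b' \<in> S" "t2 \<in> S"
    "t2 \<otimes> (a' \<otimes> s') = t2 \<otimes> (r' \<otimes> b')" using frac_repE[OF assms(3,4)] .
  have c: "a \<in> carrier R" "a' \<in> carrier R" "r \<in> carrier R" "r' \<in> carrier R"
    "b \<in> carrier R" "b' \<in> carrier R" "t1 \<in> carrier R" "t2 \<in> carrier R"
    "s \<in> carrier R" "s' \<in> carrier R"
    using a a' assms S_carrier by auto
  have "(t1 \<otimes> t2) \<otimes> ((a \<otimes> a') \<otimes> (s \<otimes> s')) = (t1 \<otimes> (a \<otimes> s)) \<otimes> (t2 \<otimes> (a' \<otimes> s'))"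
    using c by (simp add: m_ac)
  also have "\<dots> = (t1 \<otimes> t2) \<otimes> ((r \<otimes> r') \<otimes> (b \<otimes> b'))"
    using a(5) a'(5) c by (simp add: m_ac)
  finally have "frac (a \<otimes> a') (b \<otimes> b') = frac (r \<otimes> r') (s \<otimes> s')"
    using a a' assms by (subst frac_eq_iff) (auto intro: S_mult_closed)
  then show ?thesis using a(1) a'(1) by (simp add: loc_def)
qed

lemma add_frac:
  assumes "r \<in> carrier R" "s \<in> S" "r' \<in> carrier R" "s' \<in> S"
  shows "frac r s \<oplus>\<^bsub>loc R S\<^esub> frac r' s' = frac (r \<otimes> s' \<oplus> r' \<otimes> s) (s \<otimes> s')"
proof -
  obtain a b t1 where a: "loc_rep (frac r s) = (a, b)" "a \<in> carrier R" "b \<in> S" "t1 \<in> S"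
    "t1 \<otimes> (a \<otimes> s) = t1 \<otimes> (r \<otimes> b)" using frac_repE[OF assms(1,2)] .
  obtain a' b' t2 where a': "loc_rep (frac r' s') = (a', b')" "a' \<in> carrier R" "b' \<in> S" "t2 \<in> S"
    "t2 \<otimes> (a' \<otimes> s') = t2 \<otimes> (r' \<otimes> b')" using frac_repE[OF assms(3,4)] .
  have c: "a \<in> carrier R" "a' \<in> carrier R" "r \<in> carrier R" "r' \<in> carrier R"
    "b \<in> carrier R" "b' \<in> carrier R" "t1 \<in> carrier R" "t2 \<in> carrier R"
    "s \<in> carrier R" "s' \<in> carrier R"
    using a a' assms S_carrier by auto
  have "(t1 \<otimes> t2) \<otimes> ((a \<otimes> b' \<oplus> a' \<otimes> b) \<otimes> (s \<otimes> s'))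
      = (t2 \<otimes> b' \<otimes> s') \<otimes> (t1 \<otimes> (a \<otimes> s)) \<oplus> (t1 \<otimes> b \<otimes> s) \<otimes> (t2 \<otimes> (a' \<otimes> s'))"
    using c by (simp add: m_ac l_distr r_distr)
  also have "\<dots> = (t1 \<otimes> t2) \<otimes> ((r \<otimes> s' \<oplus> r' \<otimes> s) \<otimes> (b \<otimes> b'))"
    using a(5) a'(5) c by (simp add: m_ac l_distr r_distr a_ac)
  finally have "frac (a \<otimes> b' \<oplus> a' \<otimes> b) (b \<otimes> b') = frac (r \<otimes> s' \<oplus> r' \<otimes> s) (s \<otimes> s')"
    using a a' assms c by (subst frac_eq_iff) (auto intro: S_mult_closed)
  then show ?thesis using a(1) a'(1) by (simp add: loc_def)
qed

lemma zero_loc: "\<zero>\<^bsub>loc R S\<^esub> = frac \<zero> \<one>"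
  by (simp add: loc_def)

lemma one_loc: "\<one>\<^bsub>loc R S\<^esub> = frac \<one> \<one>"
  by (simp add: loc_def)

lemma abelian_group_loc: "abelian_group (loc R S)"
proof (rule abelian_groupI)
  fix x y assume "x \<in> carrier (loc R S)" "y \<in> carrier (loc R S)"
  then show "x \<oplus>\<^bsub>loc R S\<^esub> y \<in> carrier (loc R S)"
    by (elim loc_carrierE) (auto simp: add_frac S_facts intro!: frac_in_carrier)
next
  show "\<zero>\<^bsub>loc R S\<^esub> \<in> carrier (loc R S)" by (simp add: zero_loc frac_in_carrier S_facts)
next
  fix x y z assume "x \<in> carrier (loc R S)" "y \<in> carrier (loc R S)" "z \<in> carrier (loc R S)"
  then show "x \<oplus>\<^bsub>loc R S\<^esub> y \<oplus>\<^bsub>loc R S\<^esub> z = x \<oplus>\<^bsub>loc R S\<^esub> (y \<oplus>\<^bsub>loc R S\<^esub> z)"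
    by (elim loc_carrierE) (simp add: add_frac S_facts m_ac a_ac l_distr r_distr)
next
  fix x y assume "x \<in> carrier (loc R S)" "y \<in> carrier (loc R S)"
  then show "x \<oplus>\<^bsub>loc R S\<^esub> y = y \<oplus>\<^bsub>loc R S\<^esub> x"
    by (elim loc_carrierE) (simp add: add_frac S_facts m_ac a_ac)
next
  fix x assume "x \<in> carrier (loc R S)"
  then show "\<zero>\<^bsub>loc R S\<^esub> \<oplus>\<^bsub>loc R S\<^esub> x = x"
    by (elim loc_carrierE) (simp add: zero_loc add_frac S_facts)
next
  fix x assume "x \<in> carrier (loc R S)"
  then obtain r s where rs: "r \<in> carrier R" "s \<in> S" "x = frac r s" by (elim loc_carrierE)
  have "frac (\<ominus> r) s \<oplus>\<^bsub>loc R S\<^esub> x = \<zero>\<^bsub>loc R S\<^esub>"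
    using rs by (simp add: zero_loc add_frac S_facts, intro frac_eqI)
      (simp_all add: S_facts l_minus l_neg)
  then show "\<exists>y\<in>carrier (loc R S). y \<oplus>\<^bsub>loc R S\<^esub> x = \<zero>\<^bsub>loc R S\<^esub>"
    using rs by (intro bexI[of _ "frac (\<ominus> r) s"]) (auto intro!: frac_in_carrier)
qed

lemma comm_monoid_loc: "comm_monoid (loc R S)"
proof (rule comm_monoidI)
  fix x y assume "x \<in> carrier (loc R S)" "y \<in> carrier (loc R S)"
  then show "x \<otimes>\<^bsub>loc R S\<^esub> y \<in> carrier (loc R S)"
    by (elim loc_carrierE) (auto simp: mult_frac S_facts intro!: frac_in_carrier)
next
  show "\<one>\<^bsub>loc R S\<^esub> \<in> carrier (loc R S)" by (simp add: one_loc frac_in_carrier S_facts)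
next
  fix x y z assume "x \<in> carrier (loc R S)" "y \<in> carrier (loc R S)" "z \<in> carrier (loc R S)"
  then show "x \<otimes>\<^bsub>loc R S\<^esub> y \<otimes>\<^bsub>loc R S\<^esub> z = x \<otimes>\<^bsub>loc R S\<^esub> (y \<otimes>\<^bsub>loc R S\<^esub> z)"
    by (elim loc_carrierE) (simp add: mult_frac S_facts m_ac)
next
  fix x y assume "x \<in> carrier (loc R S)" "y \<in> carrier (loc R S)"
  then show "x \<otimes>\<^bsub>loc R S\<^esub> y = y \<otimes>\<^bsub>loc R S\<^esub> x"
    by (elim loc_carrierE) (simp add: mult_frac S_facts m_ac)
next
  fix x assume "x \<in> carrier (loc R S)"
  then show "\<one>\<^bsub>loc R S\<^esub> \<otimes>\<^bsub>loc R S\<^esub> x = x"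
    by (elim loc_carrierE) (simp add: one_loc mult_frac S_facts)
qed

lemma cring_loc: "cring (loc R S)"
proof (rule cringI[OF abelian_group_loc comm_monoid_loc])
  fix x y z assume "x \<in> carrier (loc R S)" "y \<in> carrier (loc R S)" "z \<in> carrier (loc R S)"
  then show "(x \<oplus>\<^bsub>loc R S\<^esub> y) \<otimes>\<^bsub>loc R S\<^esub> z = x \<otimes>\<^bsub>loc R S\<^esub> z \<oplus>\<^bsub>loc R S\<^esub> y \<otimes>\<^bsub>loc R S\<^esub> z"
    by (elim loc_carrierE) (simp add: mult_frac add_frac S_facts, intro frac_eqI,
        simp_all add: S_facts m_ac a_ac l_distr r_distr)
qed

lemma frac_eq_zero_iff:
  "r \<in> carrier R \<Longrightarrow> s \<in> S \<Longrightarrow> frac r s = \<zero>\<^bsub>loc R S\<^esub> \<longleftrightarrow> loc_vanishes R S r"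
  unfolding zero_loc loc_vanishes_def by (subst frac_eq_iff) (auto simp: S_facts)

lemma one_loc_eq_zero_iff: "\<one>\<^bsub>loc R S\<^esub> = \<zero>\<^bsub>loc R S\<^esub> \<longleftrightarrow> \<zero> \<in> S"
  unfolding one_loc using frac_eq_zero_iff[of \<one> \<one>] one_in_S
  by (auto simp: loc_vanishes_def S_facts)

lemma frac_divides_iff:
  assumes "r \<in> carrier R" "s \<in> S" "r' \<in> carrier R" "s' \<in> S"
  shows "frac r s divides\<^bsub>loc R S\<^esub> frac r' s' \<longleftrightarrow> loc_divides R S r r'"
proof
  assume "frac r s divides\<^bsub>loc R S\<^esub> frac r' s'"
  then obtain V where V: "V \<in> carrier (loc R S)" "frac r' s' = frac r s \<otimes>\<^bsub>loc R S\<^esub> V"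
    unfolding factor_def by blast
  obtain c0 u0 where cu: "c0 \<in> carrier R" "u0 \<in> S" "V = frac c0 u0"
    using V(1) by (rule loc_carrierE)
  have "frac r' s' = frac (r \<otimes> c0) (s \<otimes> u0)" using V(2) cu assms by (simp add: mult_frac)
  then obtain t where t: "t \<in> S" "t \<otimes> (r' \<otimes> (s \<otimes> u0)) = t \<otimes> (r \<otimes> c0 \<otimes> s')"
    using assms cu by (subst (asm) frac_eq_iff) (auto simp: S_facts)
  then have "(t \<otimes> s \<otimes> u0) \<otimes> r' = r \<otimes> (t \<otimes> c0 \<otimes> s')"
    using assms cu S_facts by (simp add: m_ac)
  moreover have "t \<otimes> s \<otimes> u0 \<in> S" "t \<otimes> c0 \<otimes> s' \<in> carrier R"
    using t assms cu S_facts by auto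
  ultimately show "loc_divides R S r r'"
    unfolding loc_divides_def by blast
next
  assume "loc_divides R S r r'"
  then obtain c u where cu: "c \<in> carrier R" "u \<in> S" "u \<otimes> r' = r \<otimes> c"
    unfolding loc_divides_def by blast
  have "r \<otimes> (c \<otimes> s) \<otimes> s' = (r \<otimes> c) \<otimes> (s \<otimes> s')"
    using assms cu S_facts by (simp add: m_ac)
  also have "\<dots> = r' \<otimes> (s \<otimes> (u \<otimes> s'))"
    unfolding cu(3)[symmetric] using assms cu(1,2) S_facts by (simp add: m_ac)
  finally have "frac (r \<otimes> (c \<otimes> s)) (s \<otimes> (u \<otimes> s')) = frac r' s'"
    using assms cu S_facts by (intro frac_eqI) auto
  then have "frac r' s' = frac r s \<otimes>\<^bsub>loc R S\<^esub> frac (c \<otimes> s) (u \<otimes> s')"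
    using assms cu S_facts by (simp add: mult_frac)
  moreover have "frac (c \<otimes> s) (u \<otimes> s') \<in> carrier (loc R S)"
    using assms cu S_facts by (simp add: frac_in_carrier)
  ultimately show "frac r s divides\<^bsub>loc R S\<^esub> frac r' s'"
    unfolding factor_def by blast
qed

lemma valuation_domain_loc_iff: "valuation_domain (loc R S) \<longleftrightarrow> loc_valuation R S"
proof
  assume vd: "valuation_domain (loc R S)"
  then interpret L: "domain" "loc R S" unfolding valuation_domain_def by blast
  have "loc_vanishes R S x \<or> loc_vanishes R S y"
    if "x \<in> carrier R" "y \<in> carrier R" "loc_vanishes R S (x \<otimes> y)" for x y
  proof -
    have "frac x \<one> \<otimes>\<^bsub>loc R S\<^esub> frac y \<one> = \<zero>\<^bsub>loc R S\<^esub>"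
      using that by (simp add: mult_frac frac_eq_zero_iff S_facts)
    then have "frac x \<one> = \<zero>\<^bsub>loc R S\<^esub> \<or> frac y \<one> = \<zero>\<^bsub>loc R S\<^esub>"
      using that one_in_S by (intro L.integral) (auto intro: frac_in_carrier)
    then show ?thesis using that one_in_S frac_eq_zero_iff by blast
  qed
  moreover have "loc_divides R S x y \<or> loc_divides R S y x"
    if "x \<in> carrier R" "y \<in> carrier R" for x y
    using vd that frac_in_carrier[of _ \<one>] frac_divides_iff[of _ \<one> _ \<one>] one_in_S
    unfolding valuation_domain_def by metis
  ultimately show "loc_valuation R S"
    unfolding loc_valuation_def using L.one_not_zero one_loc_eq_zero_iff by blast
next
  assume vd: "loc_valuation R S"
  interpret L: cring "loc R S" by (rule cring_loc)
  have "domain (loc R S)"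
  proof
    show "\<one>\<^bsub>loc R S\<^esub> \<noteq> \<zero>\<^bsub>loc R S\<^esub>"
      using vd one_loc_eq_zero_iff unfolding loc_valuation_def by blast
  next
    fix a b assume "a \<otimes>\<^bsub>loc R S\<^esub> b = \<zero>\<^bsub>loc R S\<^esub>" "a \<in> carrier (loc R S)" "b \<in> carrier (loc R S)"
    then show "a = \<zero>\<^bsub>loc R S\<^esub> \<or> b = \<zero>\<^bsub>loc R S\<^esub>"
      using vd unfolding loc_valuation_def
      by (elim loc_carrierE) (auto simp: mult_frac frac_eq_zero_iff S_facts)
  qed
  moreover have "x divides\<^bsub>loc R S\<^esub> y \<or> y divides\<^bsub>loc R S\<^esub> x"
    if "x \<in> carrier (loc R S)" "y \<in> carrier (loc R S)" for x y
    using that vd unfolding loc_valuation_def by (elim loc_carrierE) (simp add: frac_divides_iff)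
  ultimately show "valuation_domain (loc R S)" unfolding valuation_domain_def by blast
qed

lemma loc_ext_eq_zero_iff:
  assumes "I \<subseteq> carrier R"
  shows "loc_ext R S I = {\<zero>\<^bsub>loc R S\<^esub>} \<longleftrightarrow> (\<forall>i\<in>I. loc_vanishes R S i)"
proof -
  interpret L: cring "loc R S" by (rule cring_loc)
  have can: "loc_can R S i = frac i \<one>" "frac i \<one> \<in> carrier (loc R S)" if "i \<in> I" for i
    using assms that one_in_S by (auto simp: loc_can_def intro!: frac_in_carrier)
  have vanish: "frac i \<one> = \<zero>\<^bsub>loc R S\<^esub> \<longleftrightarrow> loc_vanishes R S i" if "i \<in> I" for i
    using assms that one_in_S frac_eq_zero_iff by blast
  have ideal: "ideal (loc_ext R S I) (loc R S)"
    unfolding loc_ext_def using can by (intro L.genideal_ideal) auto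
  show ?thesis
  proof
    assume "loc_ext R S I = {\<zero>\<^bsub>loc R S\<^esub>}"
    moreover have "loc_can R S ` I \<subseteq> loc_ext R S I"
      unfolding loc_ext_def using can by (intro L.genideal_self) auto
    ultimately show "\<forall>i\<in>I. loc_vanishes R S i"
      using can vanish by (metis image_subset_iff singletonD)
  next
    assume "\<forall>i\<in>I. loc_vanishes R S i"
    then have "loc_can R S ` I \<subseteq> {\<zero>\<^bsub>loc R S\<^esub>}" using can vanish by auto
    then have "loc_ext R S I \<subseteq> {\<zero>\<^bsub>loc R S\<^esub>}"
      unfolding loc_ext_def by (rule L.genideal_minimal[OF L.zeroideal])
    then show "loc_ext R S I = {\<zero>\<^bsub>loc R S\<^esub>}"
      using additive_subgroup.zero_closed[OF ideal.axioms(1)[OF ideal]] by blast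
  qed
qed

lemma loc_vanishes_add:
  assumes "x \<in> carrier R" "y \<in> carrier R" "loc_vanishes R S x" "loc_vanishes R S y"
  shows "loc_vanishes R S (x \<oplus> y)"
proof -
  obtain u v where uv: "u \<in> S" "u \<otimes> x = \<zero>" "v \<in> S" "v \<otimes> y = \<zero>"
    using assms(3,4) unfolding loc_vanishes_def by blast
  have "(u \<otimes> v) \<otimes> (x \<oplus> y) = v \<otimes> (u \<otimes> x) \<oplus> u \<otimes> (v \<otimes> y)"
    using assms(1,2) uv(1,3) S_facts by (simp add: r_distr m_ac)
  also have "\<dots> = \<zero>"
    unfolding uv(2,4) using uv S_facts by simp
  finally show ?thesis
    unfolding loc_vanishes_def using uv S_facts by blast
qed

lemma loc_vanishes_mult:
  assumes "x \<in> carrier R" "y \<in> carrier R" "loc_vanishes R S y"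
  shows "loc_vanishes R S (x \<otimes> y)"
proof -
  obtain u where u: "u \<in> S" "u \<otimes> y = \<zero>"
    using assms(3) unfolding loc_vanishes_def by blast
  then have "u \<otimes> (x \<otimes> y) = \<zero>"
    using assms S_carrier m_lcomm[of u x y] by simp
  then show ?thesis unfolding loc_vanishes_def using u(1) by blast
qed

lemma loc_vanishes_cancel:
  assumes "s \<in> S" "x \<in> carrier R" "loc_vanishes R S (s \<otimes> x)"
  shows "loc_vanishes R S x"
proof -
  obtain u where u: "u \<in> S" "u \<otimes> (s \<otimes> x) = \<zero>"
    using assms(3) unfolding loc_vanishes_def by blast
  then have "(u \<otimes> s) \<otimes> x = \<zero>"
    using assms S_carrier m_assoc[of u s x] by simp
  then show ?thesis unfolding loc_vanishes_def using u(1) assms(1) S_mult_closed by blast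
qed

lemma loc_divides_cancel:
  assumes "s \<in> S" "x \<in> carrier R" "y \<in> carrier R" "loc_divides R S (s \<otimes> x) (s \<otimes> y)"
  shows "loc_divides R S x y"
proof -
  obtain c u where cu: "c \<in> carrier R" "u \<in> S" "u \<otimes> (s \<otimes> y) = s \<otimes> x \<otimes> c"
    using assms(4) unfolding loc_divides_def by blast
  then have "(u \<otimes> s) \<otimes> y = x \<otimes> (s \<otimes> c)"
    using assms S_facts by (simp add: m_ac)
  then show ?thesis
    unfolding loc_divides_def using assms cu S_facts by blast
qed

lemma loc_divides_add_vanishing:
  assumes "x \<in> carrier R" "y \<in> carrier R" "i \<in> carrier R" "i' \<in> carrier R"
    and "loc_divides R S x y" "loc_vanishes R S i" "loc_vanishes R S i'"
  shows "loc_divides R S (x \<oplus> i) (y \<oplus> i')"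
proof -
  obtain c u where cu: "c \<in> carrier R" "u \<in> S" "u \<otimes> y = x \<otimes> c"
    using assms(5) unfolding loc_divides_def by blast
  obtain v v' where v: "v \<in> S" "v \<otimes> i = \<zero>" "v' \<in> S" "v' \<otimes> i' = \<zero>"
    using assms(6,7) unfolding loc_vanishes_def by blast
  have "(v \<otimes> v' \<otimes> u) \<otimes> (y \<oplus> i') = (v \<otimes> v') \<otimes> (u \<otimes> y) \<oplus> (v \<otimes> u) \<otimes> (v' \<otimes> i')"
    using assms(1-4) cu(1,2) v(1,3) S_facts by (simp add: r_distr m_ac)
  also have "\<dots> = (v \<otimes> v') \<otimes> (x \<otimes> c) \<oplus> (v' \<otimes> c) \<otimes> (v \<otimes> i)"
    unfolding cu(3) v(2,4) using assms cu v S_facts by simp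
  also have "\<dots> = (x \<oplus> i) \<otimes> (v \<otimes> v' \<otimes> c)"
    using assms(1-4) cu(1,2) v(1,3) S_facts by (simp add: l_distr r_distr m_ac)
  finally have "(v \<otimes> v' \<otimes> u) \<otimes> (y \<oplus> i') = (x \<oplus> i) \<otimes> (v \<otimes> v' \<otimes> c)" .
  moreover have "v \<otimes> v' \<otimes> u \<in> S" "v \<otimes> v' \<otimes> c \<in> carrier R"
    using cu(1,2) v(1,3) S_facts by auto
  ultimately show ?thesis
    unfolding loc_divides_def by blast
qed

lemma loc_valuation_superset:
  assumes "loc_valuation R T" "\<one> \<in> T" "T \<subseteq> S" "\<zero> \<notin> S"
  shows "loc_valuation R S"
proof -
  have "loc_vanishes R S x \<or> loc_vanishes R S y"
    if xy: "x \<in> carrier R" "y \<in> carrier R" "loc_vanishes R S (x \<otimes> y)" for x y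
  proof -
    obtain t where t: "t \<in> S" "t \<otimes> (x \<otimes> y) = \<zero>"
      using xy(3) unfolding loc_vanishes_def by blast
    then have "\<one> \<otimes> ((t \<otimes> x) \<otimes> y) = \<zero>"
      using xy S_facts by (simp add: m_assoc)
    then have "loc_vanishes R T (t \<otimes> x) \<or> loc_vanishes R T y"
      using assms(1,2) xy t S_facts unfolding loc_valuation_def loc_vanishes_def by blast
    moreover have "loc_vanishes R S x" if "loc_vanishes R T (t \<otimes> x)"
      using that loc_vanishes_cancel[OF t(1) xy(1)] assms(3)
      unfolding loc_vanishes_def by blast
    ultimately show ?thesis
      using assms(3) unfolding loc_vanishes_def by blast
  qed
  then show ?thesis
    using assms unfolding loc_valuation_def loc_divides_def by blast
qed

end

lemma (in cring) multiplicative_subset_prime_compl: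
  assumes "primeideal P R"
  shows "multiplicative_subset R (carrier R - P)"
proof
  interpret primeideal P R by fact
  show "\<one> \<in> carrier R - P" using one_imp_carrier I_notcarr by blast
  show "s \<otimes> t \<in> carrier R - P" if "s \<in> carrier R - P" "t \<in> carrier R - P" for s t
    using that I_prime by auto
qed blast

lemma (in cring) valuation_domain_loc_prime_compl_iff:
  assumes "primeideal P R"
  shows "valuation_domain (loc R (carrier R - P)) \<longleftrightarrow> loc_valuation R (carrier R - P)"
  using assms by (intro multiplicative_subset.valuation_domain_loc_iff multiplicative_subset_prime_compl)

lemma wgldim_le1_iff:
  assumes "cring R"
  shows "wgldim_le1 R \<longleftrightarrow> (\<forall>P. primeideal P R \<longrightarrow> loc_valuation R (carrier R - P))"
  unfolding wgldim_le1_def using cring.valuation_domain_loc_prime_compl_iff[OF assms] by blast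

lemma loc_induced_surjD:
  assumes "multiplicative_subset A S" "multiplicative_subset B T"
    and "f \<in> carrier A \<rightarrow> carrier B" "f ` S \<subseteq> T"
    and "loc_induced f B T ` carrier (loc A S) = carrier (loc B T)" "y \<in> carrier B"
  obtains a s t where "a \<in> carrier A" "s \<in> S" "t \<in> T" "t \<otimes>\<^bsub>B\<^esub> (y \<otimes>\<^bsub>B\<^esub> f s) = t \<otimes>\<^bsub>B\<^esub> f a"
proof -
  interpret SA: multiplicative_subset A S by fact
  interpret TB: multiplicative_subset B T by fact
  have "TB.frac y \<one>\<^bsub>B\<^esub> \<in> carrier (loc B T)"
    using assms(6) TB.one_in_S by (rule TB.frac_in_carrier)
  then obtain U where U: "U \<in> carrier (loc A S)" "TB.frac y \<one>\<^bsub>B\<^esub> = loc_induced f B T U"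
    using assms(5) by (metis imageE)
  obtain a s where as: "loc_rep U = (a, s)" "a \<in> carrier A" "s \<in> S"
    using SA.loc_rep[OF U(1)] by metis
  have fas: "f a \<in> carrier B" "f s \<in> T" using as assms(3,4) by auto
  have "TB.frac y \<one>\<^bsub>B\<^esub> = TB.frac (f a) (f s)"
    using U(2) as(1) unfolding loc_induced_def by simp
  then obtain t where "t \<in> T" "t \<otimes>\<^bsub>B\<^esub> (y \<otimes>\<^bsub>B\<^esub> f s) = t \<otimes>\<^bsub>B\<^esub> (f a \<otimes>\<^bsub>B\<^esub> \<one>\<^bsub>B\<^esub>)"
    using TB.frac_eq_iff[OF assms(6) TB.one_in_S fas(1,2)] by blast
  then show ?thesis using that as(2,3) fas(1) by simp
qed

section \<open>Transferring the valuation property\<close>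

lemma (in ring_hom_ring) loc_vanishes_image:
  assumes "h ` T \<subseteq> T'" "T \<subseteq> carrier R" "x \<in> carrier R" "loc_vanishes R T x"
  shows "loc_vanishes S T' (h x)"
proof -
  obtain u where u: "u \<in> T" "u \<otimes>\<^bsub>R\<^esub> x = \<zero>\<^bsub>R\<^esub>"
    using assms(4) unfolding loc_vanishes_def by blast
  have "h u \<otimes>\<^bsub>S\<^esub> h x = h (u \<otimes>\<^bsub>R\<^esub> x)"
    using assms(2,3) u(1) by (intro hom_mult[symmetric]) auto
  also have "\<dots> = \<zero>\<^bsub>S\<^esub>" using u(2) by simp
  finally have "h u \<otimes>\<^bsub>S\<^esub> h x = \<zero>\<^bsub>S\<^esub>" .
  moreover have "h u \<in> T'" using u(1) assms(1) by blast
  ultimately show ?thesis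
    unfolding loc_vanishes_def by blast
qed

lemma (in ring_hom_ring) loc_divides_image:
  assumes "h ` T \<subseteq> T'" "T \<subseteq> carrier R" "x \<in> carrier R" "y \<in> carrier R" "loc_divides R T x y"
  shows "loc_divides S T' (h x) (h y)"
proof -
  obtain c u where cu: "c \<in> carrier R" "u \<in> T" "u \<otimes>\<^bsub>R\<^esub> y = x \<otimes>\<^bsub>R\<^esub> c"
    using assms(5) unfolding loc_divides_def by blast
  have u: "u \<in> carrier R" using cu(2) assms(2) by blast
  have "h u \<otimes>\<^bsub>S\<^esub> h y = h (u \<otimes>\<^bsub>R\<^esub> y)" using u assms(4) by (rule hom_mult[symmetric])
  also have "\<dots> = h (x \<otimes>\<^bsub>R\<^esub> c)" using cu(3) by (rule arg_cong)
  also have "\<dots> = h x \<otimes>\<^bsub>S\<^esub> h c" using assms(3) cu(1) by (rule hom_mult)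
  finally have "h u \<otimes>\<^bsub>S\<^esub> h y = h x \<otimes>\<^bsub>S\<^esub> h c" .
  moreover have "h c \<in> carrier S" "h u \<in> T'" using cu(1,2) assms(1) by auto
  ultimately show ?thesis
    unfolding loc_divides_def by blast
qed

lemma loc_valuation_transfer:
  assumes "loc_valuation R' S'" "\<zero>\<^bsub>R\<^esub> \<notin> S" "\<phi> \<in> carrier R \<rightarrow> carrier R'"
    and vanishes: "\<And>x y. \<lbrakk>x \<in> carrier R; y \<in> carrier R; loc_vanishes R S (x \<otimes>\<^bsub>R\<^esub> y)\<rbrakk>
           \<Longrightarrow> loc_vanishes R' S' (\<phi> x \<otimes>\<^bsub>R'\<^esub> \<phi> y)"
    and vanishes_reflect: "\<And>x. \<lbrakk>x \<in> carrier R; loc_vanishes R' S' (\<phi> x)\<rbrakk> \<Longrightarrow> loc_vanishes R S x"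
    and divides_reflect: "\<And>x y. \<lbrakk>x \<in> carrier R; y \<in> carrier R; loc_divides R' S' (\<phi> x) (\<phi> y)\<rbrakk>
           \<Longrightarrow> loc_divides R S x y"
  shows "loc_valuation R S"
  unfolding loc_valuation_def
proof (intro conjI ballI impI)
  fix x y assume xy: "x \<in> carrier R" "y \<in> carrier R"
  then have \<phi>xy: "\<phi> x \<in> carrier R'" "\<phi> y \<in> carrier R'" using assms(3) by auto
  show "loc_divides R S x y \<or> loc_divides R S y x"
    using assms(1) \<phi>xy xy divides_reflect unfolding loc_valuation_def by blast
  assume "loc_vanishes R S (x \<otimes>\<^bsub>R\<^esub> y)"
  then show "loc_vanishes R S x \<or> loc_vanishes R S y"
    using assms(1) \<phi>xy xy vanishes vanishes_reflect unfolding loc_valuation_def by blast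
qed (rule assms(2))

section \<open>The amalgamated duplication\<close>

lemma RDirProd_mult [simp]: "(a, y) \<otimes>\<^bsub>RDirProd A B\<^esub> (a', y') = (a \<otimes>\<^bsub>A\<^esub> a', y \<otimes>\<^bsub>B\<^esub> y')"
  by (simp add: RDirProd_def DirProd_def monoid.extend_def)

lemma RDirProd_add [simp]: "(a, y) \<oplus>\<^bsub>RDirProd A B\<^esub> (a', y') = (a \<oplus>\<^bsub>A\<^esub> a', y \<oplus>\<^bsub>B\<^esub> y')"
  by (simp add: RDirProd_def DirProd_def monoid.extend_def)

lemma RDirProd_zero [simp]: "\<zero>\<^bsub>RDirProd A B\<^esub> = (\<zero>\<^bsub>A\<^esub>, \<zero>\<^bsub>B\<^esub>)"
  by (simp add: RDirProd_def DirProd_def monoid.extend_def)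

lemma RDirProd_one [simp]: "\<one>\<^bsub>RDirProd A B\<^esub> = (\<one>\<^bsub>A\<^esub>, \<one>\<^bsub>B\<^esub>)"
  by (simp add: RDirProd_def DirProd_def monoid.extend_def)

lemma amalg_carrier: "carrier (amalg A B f J) = {(a, f a \<oplus>\<^bsub>B\<^esub> j) | a j. a \<in> carrier A \<and> j \<in> J}"
  by (simp add: amalg_def)

lemma amalg_mult [simp]: "(a, y) \<otimes>\<^bsub>amalg A B f J\<^esub> (a', y') = (a \<otimes>\<^bsub>A\<^esub> a', y \<otimes>\<^bsub>B\<^esub> y')"
  by (simp add: amalg_def)

lemma amalg_add [simp]: "(a, y) \<oplus>\<^bsub>amalg A B f J\<^esub> (a', y') = (a \<oplus>\<^bsub>A\<^esub> a', y \<oplus>\<^bsub>B\<^esub> y')"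
  by (simp add: amalg_def)

lemma amalg_zero [simp]: "\<zero>\<^bsub>amalg A B f J\<^esub> = (\<zero>\<^bsub>A\<^esub>, \<zero>\<^bsub>B\<^esub>)"
  by (simp add: amalg_def)

lemma amalg_one [simp]: "\<one>\<^bsub>amalg A B f J\<^esub> = (\<one>\<^bsub>A\<^esub>, \<one>\<^bsub>B\<^esub>)"
  by (simp add: amalg_def)

locale amalgamation = A: cring A + B: cring B for A (structure) and B (structure) +
  fixes f and J
  assumes f_hom: "f \<in> ring_hom A B" and J_ideal: "ideal J B"
begin

abbreviation D where "D \<equiv> amalg A B f J"

abbreviation J_contr where "J_contr \<equiv> {a \<in> carrier A. f a \<in> J}"

lemma f_closed [simp]: "a \<in> carrier A \<Longrightarrow> f a \<in> carrier B"
  using f_hom by (rule ring_hom_closed)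

lemma f_mult: "a \<in> carrier A \<Longrightarrow> b \<in> carrier A \<Longrightarrow> f (a \<otimes>\<^bsub>A\<^esub> b) = f a \<otimes>\<^bsub>B\<^esub> f b"
  using f_hom by (rule ring_hom_mult)

lemma f_add: "a \<in> carrier A \<Longrightarrow> b \<in> carrier A \<Longrightarrow> f (a \<oplus>\<^bsub>A\<^esub> b) = f a \<oplus>\<^bsub>B\<^esub> f b"
  using f_hom by (rule ring_hom_add)

lemma f_one [simp]: "f \<one>\<^bsub>A\<^esub> = \<one>\<^bsub>B\<^esub>"
  using f_hom by (rule ring_hom_one)

lemma f_zero [simp]: "f \<zero>\<^bsub>A\<^esub> = \<zero>\<^bsub>B\<^esub>"
  using ring_hom_zero[OF f_hom A.ring_axioms B.ring_axioms] .

lemma f_hom_ring: "ring_hom_ring A B f"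
  using A.ring_axioms B.ring_axioms f_hom by (rule ring_hom_ringI2)

lemma f_neg: "a \<in> carrier A \<Longrightarrow> f (\<ominus>\<^bsub>A\<^esub> a) = \<ominus>\<^bsub>B\<^esub> f a"
proof -
  interpret ring_hom_ring A B f by (rule f_hom_ring)
  show "a \<in> carrier A \<Longrightarrow> f (\<ominus>\<^bsub>A\<^esub> a) = \<ominus>\<^bsub>B\<^esub> f a" by (rule hom_a_inv)
qed

lemma J_carrier [simp]: "j \<in> J \<Longrightarrow> j \<in> carrier B"
  using J_ideal by (rule ideal.Icarr)

lemma J_add: "j \<in> J \<Longrightarrow> j' \<in> J \<Longrightarrow> j \<oplus>\<^bsub>B\<^esub> j' \<in> J"
  using J_ideal by (simp add: additive_subgroup.a_closed ideal.axioms(1))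

lemma J_l_mult: "j \<in> J \<Longrightarrow> x \<in> carrier B \<Longrightarrow> x \<otimes>\<^bsub>B\<^esub> j \<in> J"
  using J_ideal by (simp add: ideal.I_l_closed)

lemma J_r_mult: "j \<in> J \<Longrightarrow> x \<in> carrier B \<Longrightarrow> j \<otimes>\<^bsub>B\<^esub> x \<in> J"
  using J_ideal by (simp add: ideal.I_r_closed)

lemma J_zero: "\<zero>\<^bsub>B\<^esub> \<in> J"
  using J_ideal by (simp add: additive_subgroup.zero_closed ideal.axioms(1))

lemma J_neg: "j \<in> J \<Longrightarrow> \<ominus>\<^bsub>B\<^esub> j \<in> J"
  using J_ideal by (simp add: additive_subgroup.a_inv_closed ideal.axioms(1))

lemma amalg_memI: "a \<in> carrier A \<Longrightarrow> j \<in> J \<Longrightarrow> (a, f a \<oplus>\<^bsub>B\<^esub> j) \<in> carrier D"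
  unfolding amalg_carrier by blast

lemma amalg_memE:
  assumes "x \<in> carrier D"
  obtains a j where "x = (a, f a \<oplus>\<^bsub>B\<^esub> j)" "a \<in> carrier A" "j \<in> J"
  using assms unfolding amalg_carrier by blast

lemma amalg_mem_pairE:
  assumes "(a, y) \<in> carrier D"
  obtains j where "y = f a \<oplus>\<^bsub>B\<^esub> j" "a \<in> carrier A" "j \<in> J"
  using assms unfolding amalg_carrier by blast

lemma amalg_carrier_subset: "(a, y) \<in> carrier D \<Longrightarrow> a \<in> carrier A \<and> y \<in> carrier B"
  by (auto elim: amalg_mem_pairE)

lemma diag_mem: "a \<in> carrier A \<Longrightarrow> (a, f a) \<in> carrier D"
  using amalg_memI[of a "\<zero>\<^bsub>B\<^esub>"] J_zero by simp

lemma J_mem: "j \<in> J \<Longrightarrow> (\<zero>\<^bsub>A\<^esub>, j) \<in> carrier D"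
  using amalg_memI[of "\<zero>\<^bsub>A\<^esub>" j] by simp

lemma J_contr_mem: "k \<in> J_contr \<Longrightarrow> (k, \<zero>\<^bsub>B\<^esub>) \<in> carrier D"
  using amalg_memI[of k "\<ominus>\<^bsub>B\<^esub> f k"] J_neg by (simp add: B.r_neg)

lemma f_plus_J_mult:
  assumes "a \<in> carrier A" "a' \<in> carrier A" "j \<in> J" "j' \<in> J"
  obtains j'' where "j'' \<in> J" "(f a \<oplus>\<^bsub>B\<^esub> j) \<otimes>\<^bsub>B\<^esub> (f a' \<oplus>\<^bsub>B\<^esub> j') = f (a \<otimes>\<^bsub>A\<^esub> a') \<oplus>\<^bsub>B\<^esub> j''"
proof
  show "f a \<otimes>\<^bsub>B\<^esub> j' \<oplus>\<^bsub>B\<^esub> j \<otimes>\<^bsub>B\<^esub> (f a' \<oplus>\<^bsub>B\<^esub> j') \<in> J"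
    using assms by (intro J_add J_l_mult J_r_mult) auto
  show "(f a \<oplus>\<^bsub>B\<^esub> j) \<otimes>\<^bsub>B\<^esub> (f a' \<oplus>\<^bsub>B\<^esub> j')
      = f (a \<otimes>\<^bsub>A\<^esub> a') \<oplus>\<^bsub>B\<^esub> (f a \<otimes>\<^bsub>B\<^esub> j' \<oplus>\<^bsub>B\<^esub> j \<otimes>\<^bsub>B\<^esub> (f a' \<oplus>\<^bsub>B\<^esub> j'))"
    using assms by (simp add: f_mult B.l_distr B.r_distr B.a_ac)
qed

lemma cring_amalg: "cring D"
proof -
  interpret P: ring "RDirProd A B" by (rule RDirProd_ring[OF A.ring_axioms B.ring_axioms])
  have sub: "carrier D \<subseteq> carrier (RDirProd A B)"
    unfolding RDirProd_carrier by (auto elim!: amalg_memE)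
  have "subring (carrier D) (RDirProd A B)"
  proof (rule P.subringI[OF sub])
    show "\<one>\<^bsub>RDirProd A B\<^esub> \<in> carrier D" using diag_mem[of "\<one>\<^bsub>A\<^esub>"] by simp
  next
    fix x assume "x \<in> carrier D"
    then obtain a j where x: "x = (a, f a \<oplus>\<^bsub>B\<^esub> j)" "a \<in> carrier A" "j \<in> J" by (rule amalg_memE)
    have "(\<ominus>\<^bsub>A\<^esub> a, \<ominus>\<^bsub>B\<^esub> (f a \<oplus>\<^bsub>B\<^esub> j)) \<oplus>\<^bsub>RDirProd A B\<^esub> x = \<zero>\<^bsub>RDirProd A B\<^esub>"
      using x by (simp add: A.l_neg B.l_neg)
    then have "\<ominus>\<^bsub>RDirProd A B\<^esub> x = (\<ominus>\<^bsub>A\<^esub> a, \<ominus>\<^bsub>B\<^esub> (f a \<oplus>\<^bsub>B\<^esub> j))"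
      using x sub by (intro P.minus_equality) (auto simp: RDirProd_carrier)
    also have "\<dots> = (\<ominus>\<^bsub>A\<^esub> a, f (\<ominus>\<^bsub>A\<^esub> a) \<oplus>\<^bsub>B\<^esub> \<ominus>\<^bsub>B\<^esub> j)"
      using x by (simp add: f_neg B.minus_add B.a_comm)
    finally show "\<ominus>\<^bsub>RDirProd A B\<^esub> x \<in> carrier D"
      using x J_neg by (simp add: amalg_memI)
  next
    fix x y assume "x \<in> carrier D" "y \<in> carrier D"
    then obtain a j a' j' where x: "x = (a, f a \<oplus>\<^bsub>B\<^esub> j)" "a \<in> carrier A" "j \<in> J"
      and y: "y = (a', f a' \<oplus>\<^bsub>B\<^esub> j')" "a' \<in> carrier A" "j' \<in> J"
      by (metis amalg_memE)
    obtain j'' where "j'' \<in> J" "(f a \<oplus>\<^bsub>B\<^esub> j) \<otimes>\<^bsub>B\<^esub> (f a' \<oplus>\<^bsub>B\<^esub> j') = f (a \<otimes>\<^bsub>A\<^esub> a') \<oplus>\<^bsub>B\<^esub> j''"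
      using f_plus_J_mult x y by metis
    then show "x \<otimes>\<^bsub>RDirProd A B\<^esub> y \<in> carrier D"
      using x y by (simp add: amalg_memI)
    have "(f a \<oplus>\<^bsub>B\<^esub> j) \<oplus>\<^bsub>B\<^esub> (f a' \<oplus>\<^bsub>B\<^esub> j') = f (a \<oplus>\<^bsub>A\<^esub> a') \<oplus>\<^bsub>B\<^esub> (j \<oplus>\<^bsub>B\<^esub> j')"
      using x y by (simp add: f_add B.a_ac)
    then show "x \<oplus>\<^bsub>RDirProd A B\<^esub> y \<in> carrier D"
      using x y J_add by (simp add: amalg_memI)
  qed
  then have "subcring (carrier D) (RDirProd A B)"
    using sub by (intro P.subcringI) (auto simp: RDirProd_carrier A.m_comm B.m_comm dest!: amalg_carrier_subset)
  then show ?thesis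
    using P.subcring_iff[OF sub] by (simp add: amalg_def)
qed

lemma amalg_mult_closed: "x \<in> carrier D \<Longrightarrow> y \<in> carrier D \<Longrightarrow> x \<otimes>\<^bsub>D\<^esub> y \<in> carrier D"
  using cring_amalg by (simp add: cring.cring_simprules(5))

lemma fst_hom: "ring_hom_ring D A fst"
proof (rule ring_hom_ringI2[OF cring.axioms(1)[OF cring_amalg] A.ring_axioms])
  show "fst \<in> ring_hom D A"
    by (rule ring_hom_memI) (auto elim!: amalg_memE)
qed

lemma snd_hom: "ring_hom_ring D B snd"
proof (rule ring_hom_ringI2[OF cring.axioms(1)[OF cring_amalg] B.ring_axioms])
  show "snd \<in> ring_hom D B"
    by (rule ring_hom_memI) (auto elim!: amalg_memE)
qed

lemma diag_hom: "ring_hom_ring A D (\<lambda>a. (a, f a))"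
proof (rule ring_hom_ringI2[OF A.ring_axioms cring.axioms(1)[OF cring_amalg]])
  show "(\<lambda>a. (a, f a)) \<in> ring_hom A D"
    by (rule ring_hom_memI) (auto simp: diag_mem f_mult f_add)
qed

lemma amalg_split:
  assumes "(a, y) \<in> carrier D"
  obtains j where "j \<in> J" "(a, y) = (a, f a) \<oplus>\<^bsub>D\<^esub> (\<zero>\<^bsub>A\<^esub>, j)"
  using assms by (elim amalg_mem_pairE) auto

lemma S_set_memI: "s \<in> carrier A - M \<Longrightarrow> j \<in> J \<Longrightarrow> f s \<oplus>\<^bsub>B\<^esub> j \<in> S_set A B f J M"
  unfolding S_set_def by blast

lemma f_in_S_set: "s \<in> carrier A - M \<Longrightarrow> f s \<in> S_set A B f J M"
  using S_set_memI[of s M "\<zero>\<^bsub>B\<^esub>"] J_zero by simp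

lemma multiplicative_subset_S_set:
  assumes "primeideal M A"
  shows "multiplicative_subset B (S_set A B f J M)"
proof
  interpret M: primeideal M A by fact
  show "S_set A B f J M \<subseteq> carrier B" unfolding S_set_def by auto
  show "\<one>\<^bsub>B\<^esub> \<in> S_set A B f J M"
    using f_in_S_set[of "\<one>\<^bsub>A\<^esub>" M] M.one_imp_carrier M.I_notcarr by auto
  fix s t assume "s \<in> S_set A B f J M" "t \<in> S_set A B f J M"
  then obtain a j b k where s: "s = f a \<oplus>\<^bsub>B\<^esub> j" "a \<in> carrier A - M" "j \<in> J"
    and t: "t = f b \<oplus>\<^bsub>B\<^esub> k" "b \<in> carrier A - M" "k \<in> J" unfolding S_set_def by blast
  obtain j' where "j' \<in> J" "s \<otimes>\<^bsub>B\<^esub> t = f (a \<otimes>\<^bsub>A\<^esub> b) \<oplus>\<^bsub>B\<^esub> j'"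
    using f_plus_J_mult[of a b j k] s t by auto
  moreover have "a \<otimes>\<^bsub>A\<^esub> b \<in> carrier A - M" using s t M.I_prime by auto
  ultimately show "s \<otimes>\<^bsub>B\<^esub> t \<in> S_set A B f J M" by (simp add: S_set_memI)
qed

lemma fst_compl_vimage: "fst ` (carrier D - {x \<in> carrier D. fst x \<in> p}) \<subseteq> carrier A - p"
  by (force elim: amalg_memE)

lemma snd_compl_vimage: "snd ` (carrier D - {x \<in> carrier D. snd x \<in> N}) \<subseteq> carrier B - N"
  by (force elim: amalg_memE)

lemma loc_valuation_base:
  assumes "primeideal p A" and D: "loc_valuation D (carrier D - {x \<in> carrier D. fst x \<in> p})"
  shows "loc_valuation A (carrier A - p)"
proof -
  let ?T = "carrier D - {x \<in> carrier D. fst x \<in> p}"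
  have diag_T: "(\<lambda>a. (a, f a)) ` (carrier A - p) \<subseteq> ?T" using diag_mem by auto
  note vanishes_fst = ring_hom_ring.loc_vanishes_image[OF fst_hom fst_compl_vimage Diff_subset diag_mem]
  note divides_fst = ring_hom_ring.loc_divides_image[OF fst_hom fst_compl_vimage Diff_subset diag_mem diag_mem]
  note vanishes_diag = ring_hom_ring.loc_vanishes_image[OF diag_hom diag_T Diff_subset]
  have zero: "\<zero>\<^bsub>A\<^esub> \<notin> carrier A - p"
    by (simp add: additive_subgroup.zero_closed[OF ideal.axioms(1)[OF primeideal.axioms(1)[OF assms(1)]]])
  have diag_Pi: "(\<lambda>a. (a, f a)) \<in> carrier A \<rightarrow> carrier D" using diag_mem by (intro Pi_I)
  have vanishes: "loc_vanishes D ?T ((x, f x) \<otimes>\<^bsub>D\<^esub> (y, f y))"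
    if "x \<in> carrier A" "y \<in> carrier A" "loc_vanishes A (carrier A - p) (x \<otimes>\<^bsub>A\<^esub> y)" for x y
    using vanishes_diag[OF _ that(3)] that(1,2) by (simp add: f_mult)
  have vanishes_reflect: "loc_vanishes A (carrier A - p) x"
    if "x \<in> carrier A" "loc_vanishes D ?T (x, f x)" for x
    using vanishes_fst[OF that] by simp
  have divides_reflect: "loc_divides A (carrier A - p) x y"
    if "x \<in> carrier A" "y \<in> carrier A" "loc_divides D ?T (x, f x) (y, f y)" for x y
    using divides_fst[OF that] by simp
  show ?thesis
    using D zero diag_Pi vanishes vanishes_reflect divides_reflect by (rule loc_valuation_transfer)
qed

lemma loc_valuation_target:
  assumes "primeideal N B" "j0 \<in> J" "j0 \<notin> N"
    and D: "loc_valuation D (carrier D - {x \<in> carrier D. snd x \<in> N})"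
  shows "loc_valuation B (carrier B - N)"
proof -
  have BN: "multiplicative_subset B (carrier B - N)"
    using assms(1) by (rule B.multiplicative_subset_prime_compl)
  let ?T = "carrier D - {x \<in> carrier D. snd x \<in> N}"
  let ?\<phi> = "\<lambda>y. (\<zero>\<^bsub>A\<^esub>, j0 \<otimes>\<^bsub>B\<^esub> y)"
  have j0: "j0 \<in> carrier B - N" using assms(2,3) by simp
  have \<phi>_mem: "?\<phi> y \<in> carrier D" if "y \<in> carrier B" for y
    using J_mem J_r_mult assms(2) that by blast
  have \<phi>_T: "?\<phi> y \<in> ?T" if "y \<in> carrier B - N" for y
  proof -
    have "j0 \<otimes>\<^bsub>B\<^esub> y \<notin> N" using primeideal.I_prime[OF assms(1), of j0 y] j0 that by blast
    then show ?thesis using \<phi>_mem[of y] that by simp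
  qed
  note vanishes_snd = ring_hom_ring.loc_vanishes_image[OF snd_hom snd_compl_vimage Diff_subset \<phi>_mem]
  note divides_snd = ring_hom_ring.loc_divides_image[OF snd_hom snd_compl_vimage Diff_subset \<phi>_mem \<phi>_mem]
  have zero: "\<zero>\<^bsub>B\<^esub> \<notin> carrier B - N"
    by (simp add: additive_subgroup.zero_closed[OF ideal.axioms(1)[OF primeideal.axioms(1)[OF assms(1)]]])
  have \<phi>_Pi: "?\<phi> \<in> carrier B \<rightarrow> carrier D" using \<phi>_mem by (intro Pi_I)
  have vanishes: "loc_vanishes D ?T (?\<phi> x \<otimes>\<^bsub>D\<^esub> ?\<phi> y)"
    if xy: "x \<in> carrier B" "y \<in> carrier B" and v: "loc_vanishes B (carrier B - N) (x \<otimes>\<^bsub>B\<^esub> y)" for x y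
  proof -
    obtain t where t: "t \<in> carrier B - N" "t \<otimes>\<^bsub>B\<^esub> (x \<otimes>\<^bsub>B\<^esub> y) = \<zero>\<^bsub>B\<^esub>"
      using v unfolding loc_vanishes_def by blast
    have tc: "t \<in> carrier B" and j0c: "j0 \<in> carrier B" using t(1) j0 by auto
    have "(j0 \<otimes>\<^bsub>B\<^esub> t) \<otimes>\<^bsub>B\<^esub> ((j0 \<otimes>\<^bsub>B\<^esub> x) \<otimes>\<^bsub>B\<^esub> (j0 \<otimes>\<^bsub>B\<^esub> y))
        = (j0 \<otimes>\<^bsub>B\<^esub> j0 \<otimes>\<^bsub>B\<^esub> j0) \<otimes>\<^bsub>B\<^esub> (t \<otimes>\<^bsub>B\<^esub> (x \<otimes>\<^bsub>B\<^esub> y))"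
      using xy tc j0c by (simp add: B.m_ac)
    also have "\<dots> = \<zero>\<^bsub>B\<^esub>" unfolding t(2) using j0c by simp
    finally have "?\<phi> t \<otimes>\<^bsub>D\<^esub> (?\<phi> x \<otimes>\<^bsub>D\<^esub> ?\<phi> y) = \<zero>\<^bsub>D\<^esub>" by simp
    then show ?thesis
      unfolding loc_vanishes_def by (rule bexI[OF _ \<phi>_T[OF t(1)]])
  qed
  have vanishes_reflect: "loc_vanishes B (carrier B - N) x"
    if "x \<in> carrier B" "loc_vanishes D ?T (?\<phi> x)" for x
    using multiplicative_subset.loc_vanishes_cancel[OF BN j0 that(1)] vanishes_snd[OF that] by simp
  have divides_reflect: "loc_divides B (carrier B - N) x y"
    if "x \<in> carrier B" "y \<in> carrier B" "loc_divides D ?T (?\<phi> x) (?\<phi> y)" for x y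
    using multiplicative_subset.loc_divides_cancel[OF BN j0 that(1,2)] divides_snd[OF that] by simp
  show ?thesis
    using D zero \<phi>_Pi vanishes vanishes_reflect divides_reflect by (rule loc_valuation_transfer)
qed

lemma J_vanishes_of_nonvanishing_contr:
  assumes M: "primeideal M A" and D: "loc_valuation D (carrier D - {x \<in> carrier D. fst x \<in> M})"
    and k: "k \<in> J_contr" "\<not> loc_vanishes A (carrier A - M) k" and j: "j \<in> J"
  shows "loc_vanishes B (S_set A B f J M) j"
proof -
  let ?T = "carrier D - {x \<in> carrier D. fst x \<in> M}"
  have one_T: "\<one>\<^bsub>D\<^esub> \<in> ?T"
    using cring.axioms(1)[OF cring_amalg] ring.ring_simprules(6) primeideal.axioms(1)[OF M]
      ideal.one_imp_carrier primeideal.I_notcarr[OF M] by fastforce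
  have "\<one>\<^bsub>D\<^esub> \<otimes>\<^bsub>D\<^esub> ((\<zero>\<^bsub>A\<^esub>, j) \<otimes>\<^bsub>D\<^esub> (k, \<zero>\<^bsub>B\<^esub>)) = \<zero>\<^bsub>D\<^esub>"
    using k(1) j by simp
  then have "loc_vanishes D ?T ((\<zero>\<^bsub>A\<^esub>, j) \<otimes>\<^bsub>D\<^esub> (k, \<zero>\<^bsub>B\<^esub>))"
    unfolding loc_vanishes_def using one_T by blast
  then have "loc_vanishes D ?T (\<zero>\<^bsub>A\<^esub>, j) \<or> loc_vanishes D ?T (k, \<zero>\<^bsub>B\<^esub>)"
    using D J_mem[OF j] J_contr_mem[OF k(1)] unfolding loc_valuation_def by blast
  moreover have "\<not> loc_vanishes D ?T (k, \<zero>\<^bsub>B\<^esub>)"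
    using ring_hom_ring.loc_vanishes_image[OF fst_hom fst_compl_vimage Diff_subset J_contr_mem[OF k(1)]] k(2)
    by auto
  moreover have "snd ` ?T \<subseteq> S_set A B f J M"
    by (force elim: amalg_memE intro: S_set_memI)
  ultimately show ?thesis
    using ring_hom_ring.loc_vanishes_image[OF snd_hom _ Diff_subset J_mem[OF j]] by force
qed

lemma J_vanishes_of_loc_induced_surj:
  assumes M: "primeideal M A"
    and surj: "loc_induced f B (S_set A B f J M) ` carrier (loc A (carrier A - M))
      = carrier (loc B (S_set A B f J M))"
    and contr: "\<forall>k\<in>J_contr. loc_vanishes A (carrier A - M) k" and j: "j \<in> J"
  shows "loc_vanishes B (S_set A B f J M) j"
proof -
  let ?S = "S_set A B f J M"
  have SB: "multiplicative_subset B ?S" using M by (rule multiplicative_subset_S_set)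
  have f_S: "f ` (carrier A - M) \<subseteq> ?S" using f_in_S_set by blast
  obtain a u t where a: "a \<in> carrier A" and u: "u \<in> carrier A - M" and t: "t \<in> ?S"
    and eq: "t \<otimes>\<^bsub>B\<^esub> (j \<otimes>\<^bsub>B\<^esub> f u) = t \<otimes>\<^bsub>B\<^esub> f a"
    using loc_induced_surjD[OF A.multiplicative_subset_prime_compl[OF M] SB _ f_S surj J_carrier[OF j]]
    by (metis Pi_I f_closed)
  (* j/1 = f(a)/f(u); writing t = f s0 + j1 puts f (s0 a) into J, so s0 a vanishes in A_M *)
  obtain s0 j1 where t_eq: "t = f s0 \<oplus>\<^bsub>B\<^esub> j1" and s0: "s0 \<in> carrier A - M" and j1: "j1 \<in> J"
    using t unfolding S_set_def by blast
  have tc: "t \<in> carrier B" using t multiplicative_subset.S_carrier[OF SB] by blast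
  have "t \<otimes>\<^bsub>B\<^esub> f a \<in> J"
    unfolding eq[symmetric] using j u tc by (intro J_l_mult J_r_mult) auto
  moreover have "t \<otimes>\<^bsub>B\<^esub> f a = f (s0 \<otimes>\<^bsub>A\<^esub> a) \<oplus>\<^bsub>B\<^esub> j1 \<otimes>\<^bsub>B\<^esub> f a"
    unfolding t_eq using s0 a j1 by (simp add: B.l_distr f_mult)
  ultimately have "f (s0 \<otimes>\<^bsub>A\<^esub> a) \<in> J"
    using ideal.mem_of_add_mem[OF J_ideal, of "f (s0 \<otimes>\<^bsub>A\<^esub> a)" "j1 \<otimes>\<^bsub>B\<^esub> f a"] j1 a s0 J_r_mult
    by simp
  then have "loc_vanishes A (carrier A - M) (s0 \<otimes>\<^bsub>A\<^esub> a)"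
    using contr s0 a by simp
  then have "loc_vanishes B ?S (f (s0 \<otimes>\<^bsub>A\<^esub> a))"
    using ring_hom_ring.loc_vanishes_image[OF f_hom_ring f_S Diff_subset] s0 a by simp
  then have "loc_vanishes B ?S (t \<otimes>\<^bsub>B\<^esub> f (s0 \<otimes>\<^bsub>A\<^esub> a))"
    using multiplicative_subset.loc_vanishes_mult[OF SB tc] s0 a by simp
  moreover have "t \<otimes>\<^bsub>B\<^esub> f (s0 \<otimes>\<^bsub>A\<^esub> a) = f s0 \<otimes>\<^bsub>B\<^esub> (t \<otimes>\<^bsub>B\<^esub> (f u \<otimes>\<^bsub>B\<^esub> j))"
  proof -
    have "t \<otimes>\<^bsub>B\<^esub> f (s0 \<otimes>\<^bsub>A\<^esub> a) = f s0 \<otimes>\<^bsub>B\<^esub> (t \<otimes>\<^bsub>B\<^esub> f a)"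
      using s0 a tc by (simp add: f_mult B.m_lcomm)
    also have "\<dots> = f s0 \<otimes>\<^bsub>B\<^esub> (t \<otimes>\<^bsub>B\<^esub> (f u \<otimes>\<^bsub>B\<^esub> j))"
      unfolding eq[symmetric] using j u by (simp add: B.m_comm)
    finally show ?thesis .
  qed
  ultimately have "loc_vanishes B ?S (f s0 \<otimes>\<^bsub>B\<^esub> (t \<otimes>\<^bsub>B\<^esub> (f u \<otimes>\<^bsub>B\<^esub> j)))" by simp
  then show ?thesis
    using multiplicative_subset.loc_vanishes_cancel[OF SB] f_in_S_set[OF s0] f_in_S_set[OF u] t j u tc
    by (meson B.m_closed J_carrier f_closed DiffD1)
qed

lemma J_vanishes_S_set_of_loc_valuation:
  assumes M: "primeideal M A" and D: "loc_valuation D (carrier D - {x \<in> carrier D. fst x \<in> M})"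
    and hyp: "loc_induced f B (S_set A B f J M) ` carrier (loc A (carrier A - M))
        = carrier (loc B (S_set A B f J M))
      \<or> loc_ext A (carrier A - M) J_contr \<noteq> {\<zero>\<^bsub>loc A (carrier A - M)\<^esub>}"
    and j: "j \<in> J"
  shows "loc_vanishes B (S_set A B f J M) j"
proof (cases "\<forall>k\<in>J_contr. loc_vanishes A (carrier A - M) k")
  case True
  have "J_contr \<subseteq> carrier A" by blast
  with True have "loc_ext A (carrier A - M) J_contr = {\<zero>\<^bsub>loc A (carrier A - M)\<^esub>}"
    by (simp add: multiplicative_subset.loc_ext_eq_zero_iff[OF A.multiplicative_subset_prime_compl[OF M]])
  with hyp have "loc_induced f B (S_set A B f J M) ` carrier (loc A (carrier A - M))
      = carrier (loc B (S_set A B f J M))" by blast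
  then show ?thesis by (rule J_vanishes_of_loc_induced_surj[OF M _ True j])
next
  case False
  then obtain k where "k \<in> J_contr" "\<not> loc_vanishes A (carrier A - M) k" by blast
  then show ?thesis by (rule J_vanishes_of_nonvanishing_contr[OF M D _ _ j])
qed

lemma S_set_subset_compl:
  assumes "ideal N B" "J \<subseteq> N" "{a \<in> carrier A. f a \<in> N} \<subseteq> M"
  shows "S_set A B f J M \<subseteq> carrier B - N"
proof
  fix t assume "t \<in> S_set A B f J M"
  then obtain s j where t: "t = f s \<oplus>\<^bsub>B\<^esub> j" "s \<in> carrier A - M" "j \<in> J"
    unfolding S_set_def by blast
  have "f s \<notin> N" using t(2) assms(3) by blast
  then have "t \<notin> N"
    using ideal.mem_of_add_mem[OF assms(1), of "f s" j] t assms(2) by auto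
  then show "t \<in> carrier B - N" using t by simp
qed

lemma J_vanishes_at_prime_over_J:
  assumes hC: "\<And>M. maximalideal M A \<Longrightarrow> J_contr \<subseteq> M \<Longrightarrow> \<forall>j\<in>J. loc_vanishes B (S_set A B f J M) j"
    and N: "primeideal N B" "J \<subseteq> N" and j: "j \<in> J"
  shows "loc_vanishes B (carrier B - N) j"
proof -
  have "primeideal {a \<in> carrier A. f a \<in> N} A"
    using ring_hom_ring.primeideal_vimage[OF f_hom_ring A.is_cring N(1)] .
  then obtain M where M: "maximalideal M A" "{a \<in> carrier A. f a \<in> N} \<subseteq> M"
    by (rule A.exists_maximalideal_above_prime)
  then have "loc_vanishes B (S_set A B f J M) j"
    using hC N(2) j by blast
  moreover have "S_set A B f J M \<subseteq> carrier B - N"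
    using S_set_subset_compl[OF primeideal.axioms(1)[OF N(1)] N(2) M(2)] .
  ultimately show ?thesis unfolding loc_vanishes_def by blast
qed

(* The primes P of D containing 0 \<times> J are pulled back along fst from A_trace P, the others
   along snd from B_trace P j0, for any j0 \<in> J with (0, j0) \<notin> P. *)
abbreviation A_trace :: "('a \<times> 'c) set \<Rightarrow> 'a set" where
  "A_trace P \<equiv> {a \<in> carrier A. (a, f a) \<in> P}"

abbreviation B_trace :: "('a \<times> 'c) set \<Rightarrow> 'c \<Rightarrow> 'c set" where
  "B_trace P j0 \<equiv> {y \<in> carrier B. (\<zero>\<^bsub>A\<^esub>, j0 \<otimes>\<^bsub>B\<^esub> y) \<in> P}"

lemma primeideal_A_trace: "primeideal P D \<Longrightarrow> primeideal (A_trace P) A"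
  by (rule ring_hom_ring.primeideal_vimage[OF diag_hom A.is_cring])

lemma mem_ideal_containing_J_iff:
  assumes P: "ideal P D" and J_P: "\<And>j. j \<in> J \<Longrightarrow> (\<zero>\<^bsub>A\<^esub>, j) \<in> P" and x: "(a, y) \<in> carrier D"
  shows "(a, y) \<in> P \<longleftrightarrow> (a, f a) \<in> P"
proof -
  obtain j where j: "j \<in> J" and split: "(a, y) = (a, f a) \<oplus>\<^bsub>D\<^esub> (\<zero>\<^bsub>A\<^esub>, j)"
    using x by (rule amalg_split)
  have a: "a \<in> carrier A" using x amalg_carrier_subset by blast
  show ?thesis
  proof
    assume "(a, y) \<in> P"
    then show "(a, f a) \<in> P"
      using ideal.mem_of_add_mem[OF P diag_mem[OF a] J_P[OF j]] split by simp
  next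
    assume "(a, f a) \<in> P"
    then show "(a, y) \<in> P"
      unfolding split by (rule additive_subgroup.a_closed[OF ideal.axioms(1)[OF P] _ J_P[OF j]])
  qed
qed

lemma J_vanishes_at_amalg_prime:
  assumes hC: "\<And>M. maximalideal M A \<Longrightarrow> J_contr \<subseteq> M \<Longrightarrow> \<forall>j\<in>J. loc_vanishes B (S_set A B f J M) j"
    and P: "primeideal P D" and J_P: "\<And>j. j \<in> J \<Longrightarrow> (\<zero>\<^bsub>A\<^esub>, j) \<in> P" and j: "j \<in> J"
  shows "loc_vanishes D (carrier D - P) (\<zero>\<^bsub>A\<^esub>, j)"
proof -
  have P_iff: "(a, y) \<in> P \<longleftrightarrow> (a, f a) \<in> P" if "(a, y) \<in> carrier D" for a y
    using primeideal.axioms(1)[OF P] J_P that by (rule mem_ideal_containing_J_iff)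
  have "\<exists>U \<in> carrier D - P. U \<otimes>\<^bsub>D\<^esub> (\<zero>\<^bsub>A\<^esub>, j) = \<zero>\<^bsub>D\<^esub>"
  proof (cases "J_contr \<subseteq> A_trace P")
    case True
    obtain M where M: "maximalideal M A" "A_trace P \<subseteq> M"
      using primeideal_A_trace[OF P] by (rule A.exists_maximalideal_above_prime)
    have "J_contr \<subseteq> M" using True M(2) by (rule subset_trans)
    then have "loc_vanishes B (S_set A B f J M) j" using hC[OF M(1)] j by blast
    then obtain t where t: "t \<in> S_set A B f J M" "t \<otimes>\<^bsub>B\<^esub> j = \<zero>\<^bsub>B\<^esub>"
      unfolding loc_vanishes_def by blast
    then obtain s j' where s: "s \<in> carrier A - M" "j' \<in> J" "t = f s \<oplus>\<^bsub>B\<^esub> j'"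
      unfolding S_set_def by blast
    then have st: "(s, t) \<in> carrier D" by (simp add: amalg_memI)
    have "(s, f s) \<notin> P" using s(1) M(2) by blast
    then have "(s, t) \<in> carrier D - P" using P_iff[OF st] st by blast
    moreover have "(s, t) \<otimes>\<^bsub>D\<^esub> (\<zero>\<^bsub>A\<^esub>, j) = \<zero>\<^bsub>D\<^esub>" using s(1) t(2) by simp
    ultimately show ?thesis by blast
  next
    case False
    then obtain k where k: "k \<in> J_contr" "(k, f k) \<notin> P" by blast
    have "(k, \<zero>\<^bsub>B\<^esub>) \<in> carrier D - P"
      using P_iff[OF J_contr_mem[OF k(1)]] J_contr_mem[OF k(1)] k(2) by blast
    moreover have "(k, \<zero>\<^bsub>B\<^esub>) \<otimes>\<^bsub>D\<^esub> (\<zero>\<^bsub>A\<^esub>, j) = \<zero>\<^bsub>D\<^esub>" using k(1) j by simp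
    ultimately show ?thesis by blast
  qed
  then show ?thesis unfolding loc_vanishes_def .
qed

lemma loc_vanishes_of_diag:
  assumes T: "multiplicative_subset D T" and J_T: "\<And>j. j \<in> J \<Longrightarrow> loc_vanishes D T (\<zero>\<^bsub>A\<^esub>, j)"
    and x: "(a, y) \<in> carrier D" and v: "loc_vanishes D T (a, f a)"
  shows "loc_vanishes D T (a, y)"
proof -
  obtain j where j: "j \<in> J" "(a, y) = (a, f a) \<oplus>\<^bsub>D\<^esub> (\<zero>\<^bsub>A\<^esub>, j)"
    using x by (rule amalg_split)
  have "a \<in> carrier A" using x amalg_carrier_subset by blast
  then show ?thesis
    unfolding j(2)
    by (rule multiplicative_subset.loc_vanishes_add[OF T diag_mem J_mem[OF j(1)] v J_T[OF j(1)]])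
qed

lemma loc_divides_of_diag:
  assumes T: "multiplicative_subset D T" and J_T: "\<And>j. j \<in> J \<Longrightarrow> loc_vanishes D T (\<zero>\<^bsub>A\<^esub>, j)"
    and x: "(a, y) \<in> carrier D" and x': "(b, z) \<in> carrier D"
    and d: "loc_divides D T (a, f a) (b, f b)"
  shows "loc_divides D T (a, y) (b, z)"
proof -
  obtain i where i: "i \<in> J" "(a, y) = (a, f a) \<oplus>\<^bsub>D\<^esub> (\<zero>\<^bsub>A\<^esub>, i)"
    using x by (rule amalg_split)
  obtain i' where i': "i' \<in> J" "(b, z) = (b, f b) \<oplus>\<^bsub>D\<^esub> (\<zero>\<^bsub>A\<^esub>, i')"
    using x' by (rule amalg_split)
  have "a \<in> carrier A" "b \<in> carrier A" using x x' amalg_carrier_subset by blast+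
  then show ?thesis
    unfolding i(2) i'(2)
    by (rule multiplicative_subset.loc_divides_add_vanishing[OF T diag_mem diag_mem
          J_mem[OF i(1)] J_mem[OF i'(1)] d J_T[OF i(1)] J_T[OF i'(1)]])
qed

lemma loc_valuation_amalg_containing_J:
  assumes P: "primeideal P D" and J_P: "\<And>j. j \<in> J \<Longrightarrow> (\<zero>\<^bsub>A\<^esub>, j) \<in> P"
    and J_vanishes: "\<And>j. j \<in> J \<Longrightarrow> loc_vanishes D (carrier D - P) (\<zero>\<^bsub>A\<^esub>, j)"
    and vA: "loc_valuation A (carrier A - A_trace P)"
  shows "loc_valuation D (carrier D - P)"
proof -
  define p where "p = A_trace P"
  have P_iff: "(a, y) \<in> P \<longleftrightarrow> a \<in> p" if "(a, y) \<in> carrier D" for a y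
    using mem_ideal_containing_J_iff[OF primeideal.axioms(1)[OF P] J_P that]
      amalg_carrier_subset[OF that] unfolding p_def by blast
  have DP: "multiplicative_subset D (carrier D - P)"
    using P by (rule cring.multiplicative_subset_prime_compl[OF cring_amalg])
  have fst_T: "fst ` (carrier D - P) \<subseteq> carrier A - p"
    using P_iff by (force elim: amalg_memE)
  have diag_T: "(\<lambda>a. (a, f a)) ` (carrier A - p) \<subseteq> carrier D - P"
    using P_iff diag_mem by force
  have zero: "\<zero>\<^bsub>D\<^esub> \<notin> carrier D - P"
    using additive_subgroup.zero_closed[OF ideal.axioms(1)[OF primeideal.axioms(1)[OF P]]] by blast
  have fst_Pi: "fst \<in> carrier D \<rightarrow> carrier A" by (auto elim: amalg_memE)
  have vanishes: "loc_vanishes A (carrier A - p) (fst x \<otimes>\<^bsub>A\<^esub> fst y)"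
    if "x \<in> carrier D" "y \<in> carrier D" "loc_vanishes D (carrier D - P) (x \<otimes>\<^bsub>D\<^esub> y)" for x y
    using ring_hom_ring.loc_vanishes_image[OF fst_hom fst_T Diff_subset amalg_mult_closed[OF that(1,2)] that(3)]
    by (simp add: ring_hom_mult[OF ring_hom_ring.homh[OF fst_hom] that(1,2)])
  have vanishes_reflect: "loc_vanishes D (carrier D - P) x"
    if x: "x \<in> carrier D" and v: "loc_vanishes A (carrier A - p) (fst x)" for x
  proof -
    obtain a y where xy: "x = (a, y)" by fastforce
    have a: "a \<in> carrier A" using x xy amalg_carrier_subset by blast
    have "loc_vanishes D (carrier D - P) (a, f a)"
      using ring_hom_ring.loc_vanishes_image[OF diag_hom diag_T Diff_subset a] v xy by simp
    with DP J_vanishes x show ?thesis unfolding xy by (rule loc_vanishes_of_diag)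
  qed
  have divides_reflect: "loc_divides D (carrier D - P) x x'"
    if x: "x \<in> carrier D" and x': "x' \<in> carrier D"
      and d: "loc_divides A (carrier A - p) (fst x) (fst x')" for x x'
  proof -
    obtain a y b z where xy: "x = (a, y)" "x' = (b, z)" by fastforce
    have ab: "a \<in> carrier A" "b \<in> carrier A" using x x' xy amalg_carrier_subset by blast+
    have "loc_divides D (carrier D - P) (a, f a) (b, f b)"
      using ring_hom_ring.loc_divides_image[OF diag_hom diag_T Diff_subset ab] d xy by simp
    with DP J_vanishes x x' show ?thesis unfolding xy by (rule loc_divides_of_diag)
  qed
  show ?thesis
    using vA[folded p_def] zero fst_Pi vanishes vanishes_reflect divides_reflect
    by (rule loc_valuation_transfer)
qed

lemma primeideal_B_trace:
  assumes P: "primeideal P D" and j0: "j0 \<in> J" "(\<zero>\<^bsub>A\<^esub>, j0) \<notin> P"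
  shows "primeideal (B_trace P j0) B"
proof -
  let ?\<psi> = "\<lambda>y. (\<zero>\<^bsub>A\<^esub>, j0 \<otimes>\<^bsub>B\<^esub> y)"
  have j0c: "j0 \<in> carrier B" using j0(1) by simp
  have \<psi>_Pi: "?\<psi> \<in> carrier B \<rightarrow> carrier D"
    using J_mem J_r_mult j0(1) by (intro Pi_I) blast
  have add: "?\<psi> (x \<oplus>\<^bsub>B\<^esub> y) = ?\<psi> x \<oplus>\<^bsub>D\<^esub> ?\<psi> y" if "x \<in> carrier B" "y \<in> carrier B" for x y
    using that j0c by (simp add: B.r_distr)
  have mult: "?\<psi> x \<otimes>\<^bsub>D\<^esub> ?\<psi> y = ?\<psi> \<one>\<^bsub>B\<^esub> \<otimes>\<^bsub>D\<^esub> ?\<psi> (x \<otimes>\<^bsub>B\<^esub> y)"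
    if "x \<in> carrier B" "y \<in> carrier B" for x y
    using that j0c by (simp add: B.m_ac)
  have one: "?\<psi> \<one>\<^bsub>B\<^esub> \<notin> P" using j0 by simp
  show ?thesis
    using B.is_cring cring_amalg P \<psi>_Pi add mult one by (rule primeideal_vimage_twisted_hom)
qed

lemma mem_prime_avoiding_J_iff:
  assumes P: "primeideal P D" and j0: "j0 \<in> J" "(\<zero>\<^bsub>A\<^esub>, j0) \<notin> P" and x: "(a, y) \<in> carrier D"
  shows "(a, y) \<in> P \<longleftrightarrow> y \<in> B_trace P j0"
proof -
  have y: "y \<in> carrier B" using amalg_carrier_subset[OF x] by blast
  have eq: "(\<zero>\<^bsub>A\<^esub>, j0) \<otimes>\<^bsub>D\<^esub> (a, y) = (\<zero>\<^bsub>A\<^esub>, j0 \<otimes>\<^bsub>B\<^esub> y)"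
    using amalg_carrier_subset[OF x] by simp
  have "(a, y) \<in> P \<longleftrightarrow> (\<zero>\<^bsub>A\<^esub>, j0 \<otimes>\<^bsub>B\<^esub> y) \<in> P"
  proof
    assume "(a, y) \<in> P"
    then show "(\<zero>\<^bsub>A\<^esub>, j0 \<otimes>\<^bsub>B\<^esub> y) \<in> P"
      unfolding eq[symmetric] using J_mem[OF j0(1)] by (rule ideal.I_l_closed[OF primeideal.axioms(1)[OF P]])
  next
    assume "(\<zero>\<^bsub>A\<^esub>, j0 \<otimes>\<^bsub>B\<^esub> y) \<in> P"
    then have "(\<zero>\<^bsub>A\<^esub>, j0) \<in> P \<or> (a, y) \<in> P"
      unfolding eq[symmetric] using J_mem[OF j0(1)] x by (intro primeideal.I_prime[OF P])
    then show "(a, y) \<in> P" using j0(2) by blast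
  qed
  then show ?thesis using y by simp
qed

lemma B_trace_twist_compl:
  assumes P: "primeideal P D" and j0: "j0 \<in> J" "(\<zero>\<^bsub>A\<^esub>, j0) \<notin> P" and u: "u \<in> carrier B - B_trace P j0"
  shows "(\<zero>\<^bsub>A\<^esub>, j0 \<otimes>\<^bsub>B\<^esub> u) \<in> carrier D - P"
proof -
  have mem: "(\<zero>\<^bsub>A\<^esub>, j0 \<otimes>\<^bsub>B\<^esub> u) \<in> carrier D"
    using J_mem J_r_mult j0(1) u by blast
  have "j0 \<notin> B_trace P j0"
    using mem_prime_avoiding_J_iff[OF P j0 J_mem[OF j0(1)]] j0(2) by simp
  then have "j0 \<otimes>\<^bsub>B\<^esub> u \<notin> B_trace P j0"
    using primeideal.I_prime[OF primeideal_B_trace[OF P j0], of j0 u] j0(1) u by auto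
  then show ?thesis
    using mem_prime_avoiding_J_iff[OF P j0 mem] mem by blast
qed

lemma loc_valuation_amalg_avoiding_J:
  assumes P: "primeideal P D" and j0: "j0 \<in> J" "(\<zero>\<^bsub>A\<^esub>, j0) \<notin> P"
    and vB: "loc_valuation B (carrier B - B_trace P j0)"
  shows "loc_valuation D (carrier D - P)"
proof -
  let ?q = "B_trace P j0"
  let ?\<psi> = "\<lambda>y. (\<zero>\<^bsub>A\<^esub>, j0 \<otimes>\<^bsub>B\<^esub> y)"
  note \<psi>_T = B_trace_twist_compl[OF P j0]
  have snd_T: "snd ` (carrier D - P) \<subseteq> carrier B - ?q"
    using mem_prime_avoiding_J_iff[OF P j0] by (force elim: amalg_memE)
  have zero: "\<zero>\<^bsub>D\<^esub> \<notin> carrier D - P"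
    using additive_subgroup.zero_closed[OF ideal.axioms(1)[OF primeideal.axioms(1)[OF P]]] by blast
  have snd_Pi: "snd \<in> carrier D \<rightarrow> carrier B" by (auto elim: amalg_memE)
  have vanishes: "loc_vanishes B (carrier B - ?q) (snd x \<otimes>\<^bsub>B\<^esub> snd y)"
    if "x \<in> carrier D" "y \<in> carrier D" "loc_vanishes D (carrier D - P) (x \<otimes>\<^bsub>D\<^esub> y)" for x y
    using ring_hom_ring.loc_vanishes_image[OF snd_hom snd_T Diff_subset amalg_mult_closed[OF that(1,2)] that(3)]
    by (simp add: ring_hom_mult[OF ring_hom_ring.homh[OF snd_hom] that(1,2)])
  have vanishes_reflect: "loc_vanishes D (carrier D - P) x"
    if x: "x \<in> carrier D" and v: "loc_vanishes B (carrier B - ?q) (snd x)" for x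
  proof -
    obtain u where u: "u \<in> carrier B - ?q" "u \<otimes>\<^bsub>B\<^esub> snd x = \<zero>\<^bsub>B\<^esub>"
      using v unfolding loc_vanishes_def by blast
    obtain a y where a: "x = (a, y)" "a \<in> carrier A" "y \<in> carrier B"
      using x by (auto elim: amalg_memE)
    have "?\<psi> u \<otimes>\<^bsub>D\<^esub> x = \<zero>\<^bsub>D\<^esub>"
      using u a j0(1) by (simp add: B.m_assoc)
    then show ?thesis unfolding loc_vanishes_def by (rule bexI[OF _ \<psi>_T[OF u(1)]])
  qed
  have divides_reflect: "loc_divides D (carrier D - P) x y"
    if x: "x \<in> carrier D" and y: "y \<in> carrier D" and d: "loc_divides B (carrier B - ?q) (snd x) (snd y)"
    for x y
  proof -
    obtain c u where cu: "c \<in> carrier B" "u \<in> carrier B - ?q" "u \<otimes>\<^bsub>B\<^esub> snd y = snd x \<otimes>\<^bsub>B\<^esub> c"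
      using d unfolding loc_divides_def by blast
    obtain a z where a: "x = (a, z)" "a \<in> carrier A" "z \<in> carrier B"
      using x by (auto elim: amalg_memE)
    obtain b w where b: "y = (b, w)" "b \<in> carrier A" "w \<in> carrier B"
      using y by (auto elim: amalg_memE)
    have "?\<psi> u \<otimes>\<^bsub>D\<^esub> y = (\<zero>\<^bsub>A\<^esub>, j0 \<otimes>\<^bsub>B\<^esub> (u \<otimes>\<^bsub>B\<^esub> w))"
      using cu(2) b j0(1) by (simp add: B.m_assoc)
    also have "\<dots> = x \<otimes>\<^bsub>D\<^esub> ?\<psi> c"
      using cu a b j0(1) by (simp add: B.m_ac)
    finally show ?thesis
      unfolding loc_divides_def using \<psi>_T[OF cu(2)] J_mem J_r_mult j0(1) cu(1) by blast
  qed
  show ?thesis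
    using vB zero snd_Pi vanishes vanishes_reflect divides_reflect by (rule loc_valuation_transfer)
qed

lemma J_not_subset_over_B_trace:
  assumes hC: "\<And>M. maximalideal M A \<Longrightarrow> J_contr \<subseteq> M \<Longrightarrow> \<forall>j\<in>J. loc_vanishes B (S_set A B f J M) j"
    and P: "primeideal P D" and j0: "j0 \<in> J" "(\<zero>\<^bsub>A\<^esub>, j0) \<notin> P"
    and N: "primeideal N B" "B_trace P j0 \<subseteq> N"
  shows "\<not> J \<subseteq> N"
proof
  assume "J \<subseteq> N"
  with hC N(1) have "loc_vanishes B (carrier B - N) j0"
    using j0(1) by (rule J_vanishes_at_prime_over_J)
  then obtain t where t: "t \<in> carrier B - N" "t \<otimes>\<^bsub>B\<^esub> j0 = \<zero>\<^bsub>B\<^esub>"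
    unfolding loc_vanishes_def by blast
  then have "(\<zero>\<^bsub>A\<^esub>, j0 \<otimes>\<^bsub>B\<^esub> t) \<notin> P" using B_trace_twist_compl[OF P j0] N(2) by blast
  moreover have "(\<zero>\<^bsub>A\<^esub>, j0 \<otimes>\<^bsub>B\<^esub> t) = \<zero>\<^bsub>D\<^esub>" using t j0(1) by (simp add: B.m_comm)
  ultimately show False
    using additive_subgroup.zero_closed[OF ideal.axioms(1)[OF primeideal.axioms(1)[OF P]]] by simp
qed

lemma loc_valuation_amalg_prime:
  assumes hA: "\<And>p. primeideal p A \<Longrightarrow> loc_valuation A (carrier A - p)"
    and hB: "\<And>N. maximalideal N B \<Longrightarrow> \<not> J \<subseteq> N \<Longrightarrow> loc_valuation B (carrier B - N)"
    and hC: "\<And>M. maximalideal M A \<Longrightarrow> J_contr \<subseteq> M \<Longrightarrow> \<forall>j\<in>J. loc_vanishes B (S_set A B f J M) j"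
    and P: "primeideal P D"
  shows "loc_valuation D (carrier D - P)"
proof (cases "\<forall>j\<in>J. (\<zero>\<^bsub>A\<^esub>, j) \<in> P")
  case True
  then have J_P: "\<And>j. j \<in> J \<Longrightarrow> (\<zero>\<^bsub>A\<^esub>, j) \<in> P" by blast
  show ?thesis
    using P J_P J_vanishes_at_amalg_prime[OF hC P J_P] hA[OF primeideal_A_trace[OF P]]
    by (rule loc_valuation_amalg_containing_J)
next
  case False
  then obtain j0 where j0: "j0 \<in> J" "(\<zero>\<^bsub>A\<^esub>, j0) \<notin> P" by blast
  have q: "primeideal (B_trace P j0) B" using P j0 by (rule primeideal_B_trace)
  then obtain N where N: "maximalideal N B" "B_trace P j0 \<subseteq> N"
    by (rule B.exists_maximalideal_above_prime)
  then have "loc_valuation B (carrier B - N)"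
    using hB J_not_subset_over_B_trace[OF hC P j0 B.maximalideal_prime] by blast
  (* B_q is a further localization of B_N *)
  moreover have "\<one>\<^bsub>B\<^esub> \<in> carrier B - N" "\<zero>\<^bsub>B\<^esub> \<notin> carrier B - B_trace P j0"
    using ideal.one_imp_carrier maximalideal.axioms(1)[OF N(1)] maximalideal.I_notcarr[OF N(1)]
      additive_subgroup.zero_closed[OF ideal.axioms(1)[OF primeideal.axioms(1)[OF q]]] by auto
  ultimately have "loc_valuation B (carrier B - B_trace P j0)"
    using N(2) by (intro multiplicative_subset.loc_valuation_superset[OF B.multiplicative_subset_prime_compl[OF q]])
      auto
  then show ?thesis using P j0 by (intro loc_valuation_amalg_avoiding_J)
qed

lemma loc_ext_S_set_eq_zero_iff:
  assumes "primeideal M A"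
  shows "loc_ext B (S_set A B f J M) J = {\<zero>\<^bsub>loc B (S_set A B f J M)\<^esub>}
    \<longleftrightarrow> (\<forall>j\<in>J. loc_vanishes B (S_set A B f J M) j)"
proof -
  have "J \<subseteq> carrier B" by auto
  then show ?thesis
    by (rule multiplicative_subset.loc_ext_eq_zero_iff[OF multiplicative_subset_S_set[OF assms]])
qed

lemma wgldim_le1_amalg_imp:
  assumes hyp: "\<And>M. maximalideal M A \<Longrightarrow> J_contr \<subseteq> M \<Longrightarrow>
        loc_induced f B (S_set A B f J M) ` carrier (loc A (carrier A - M))
          = carrier (loc B (S_set A B f J M))
        \<or> loc_ext A (carrier A - M) J_contr \<noteq> {\<zero>\<^bsub>loc A (carrier A - M)\<^esub>}"
    and "wgldim_le1 D"
  shows "wgldim_le1 A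
     \<and> (\<forall>N. maximalideal N B \<and> \<not> J \<subseteq> N \<longrightarrow> valuation_domain (loc B (carrier B - N)))
     \<and> (\<forall>M. maximalideal M A \<and> J_contr \<subseteq> M \<longrightarrow>
          loc_ext B (S_set A B f J M) J = {\<zero>\<^bsub>loc B (S_set A B f J M)\<^esub>})"
proof -
  have D: "loc_valuation D (carrier D - P)" if "primeideal P D" for P
    using assms(2) that unfolding wgldim_le1_iff[OF cring_amalg] by blast
  show ?thesis
  proof (intro conjI allI impI)
    have "loc_valuation A (carrier A - p)" if p: "primeideal p A" for p
      using p D[OF ring_hom_ring.primeideal_vimage[OF fst_hom cring_amalg p]] by (rule loc_valuation_base)
    then show "wgldim_le1 A" unfolding wgldim_le1_iff[OF A.is_cring] by blast
  next
    fix N assume N: "maximalideal N B \<and> \<not> J \<subseteq> N"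
    then obtain j0 where j0: "j0 \<in> J" "j0 \<notin> N" by blast
    have Np: "primeideal N B" using N B.maximalideal_prime by blast
    have "loc_valuation B (carrier B - N)"
      using Np j0 D[OF ring_hom_ring.primeideal_vimage[OF snd_hom cring_amalg Np]]
      by (rule loc_valuation_target)
    then show "valuation_domain (loc B (carrier B - N))"
      using B.valuation_domain_loc_prime_compl_iff[OF Np] by simp
  next
    fix M assume M: "maximalideal M A \<and> J_contr \<subseteq> M"
    then have M': "primeideal M A" using A.maximalideal_prime by blast
    have "loc_vanishes B (S_set A B f J M) j" if "j \<in> J" for j
      using M' D[OF ring_hom_ring.primeideal_vimage[OF fst_hom cring_amalg M']]
        hyp[OF conjunct1[OF M] conjunct2[OF M]] that
      by (rule J_vanishes_S_set_of_loc_valuation)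
    then show "loc_ext B (S_set A B f J M) J = {\<zero>\<^bsub>loc B (S_set A B f J M)\<^esub>}"
      using loc_ext_S_set_eq_zero_iff[OF M'] by blast
  qed
qed

lemma wgldim_le1_amalgI:
  assumes "wgldim_le1 A
     \<and> (\<forall>N. maximalideal N B \<and> \<not> J \<subseteq> N \<longrightarrow> valuation_domain (loc B (carrier B - N)))
     \<and> (\<forall>M. maximalideal M A \<and> J_contr \<subseteq> M \<longrightarrow>
          loc_ext B (S_set A B f J M) J = {\<zero>\<^bsub>loc B (S_set A B f J M)\<^esub>})"
  shows "wgldim_le1 D"
proof -
  have hA: "loc_valuation A (carrier A - p)" if "primeideal p A" for p
    using assms that unfolding wgldim_le1_iff[OF A.is_cring] by blast
  have hB: "loc_valuation B (carrier B - N)" if "maximalideal N B" "\<not> J \<subseteq> N" for N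
    using assms that B.valuation_domain_loc_prime_compl_iff[OF B.maximalideal_prime[OF that(1)]] by blast
  have hC: "\<forall>j\<in>J. loc_vanishes B (S_set A B f J M) j" if "maximalideal M A" "J_contr \<subseteq> M" for M
    using assms that loc_ext_S_set_eq_zero_iff[OF A.maximalideal_prime[OF that(1)]] by blast
  have "loc_valuation D (carrier D - P)" if "primeideal P D" for P
    using hA hB hC that by (rule loc_valuation_amalg_prime)
  then show ?thesis unfolding wgldim_le1_iff[OF cring_amalg] by blast
qed

end

theorem proposition4p11:
  fixes A :: "('a, 'm) ring_scheme" and B :: "('b, 'n) ring_scheme"
    and f :: "'a \<Rightarrow> 'b" and J :: "'b set"
  assumes "cring A" and "cring B" and "f \<in> ring_hom A B" and "ideal J B"
    and hyp: "\<And>M. maximalideal M A \<Longrightarrow> {a \<in> carrier A. f a \<in> J} \<subseteq> M \<Longrightarrow>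
        loc_induced f B (S_set A B f J M) ` carrier (loc A (carrier A - M))
          = carrier (loc B (S_set A B f J M))
        \<or> loc_ext A (carrier A - M) {a \<in> carrier A. f a \<in> J}
          \<noteq> {\<zero>\<^bsub>loc A (carrier A - M)\<^esub>}"
  shows "wgldim_le1 (amalg A B f J) \<longleftrightarrow>
    (wgldim_le1 A
     \<and> (\<forall>N. maximalideal N B \<and> \<not> J \<subseteq> N \<longrightarrow> valuation_domain (loc B (carrier B - N)))
     \<and> (\<forall>M. maximalideal M A \<and> {a \<in> carrier A. f a \<in> J} \<subseteq> M \<longrightarrow>
          loc_ext B (S_set A B f J M) J = {\<zero>\<^bsub>loc B (S_set A B f J M)\<^esub>}))"
proof -
  interpret amalgamation A B f J
    using assms(1-4) by (intro amalgamation.intro amalgamation_axioms.intro) auto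
  show ?thesis (is "?lhs \<longleftrightarrow> ?rhs")
  proof
    assume ?lhs
    with hyp show ?rhs by (rule wgldim_le1_amalg_imp)
  next
    assume ?rhs
    then show ?lhs by (rule wgldim_le1_amalgI)
  qed
qed

end
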